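(* Let $\mathfrak{F}$ be either $\mathrm{CTO}$ or $\mathrm{GPC}$, and let $A$ and $B$ be two physical systems with relatively non-degenerate Hamiltonians. Let $\rho^A$ be a state of $A$ and $\sigma^B$ a state of $B$, and let $\mathbf{r}^A,\mathbf{s}^B,\mathbf{g}^A,\mathbf{g}^B$ be the probability vectors of diagonal entries (in the energy eigenbases) of $\rho^A,\sigma^B,\gamma^A,\gamma^B$ respectively. Then the following are equivalent: (1) there exists $\mathcal{E}\in\mathfrak{F}(A\to B)$ with $\mathcal{E}(\rho^A)=\sigma^B$ (and $\mathcal{E}(\gamma^A)=\gamma^B$); (2) $\sigma^B$ is diagonal in the energy eigenbasis of $B$ and $(\mathbf{r}^A,\mathbf{g}^A)\succ(\mathbf{s}^B,\mathbf{g}^B)$.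
   Context: Each system $X$ is finite dimensional with Hamiltonian $H^X$ (Hermitian, positive semidefinite); composites of non-interacting systems have $H^{XY}=H^X\otimes I^Y+I^X\otimes H^Y$. For fixed inverse temperature $\beta>0$ the Gibbs state is $\gamma^X=e^{-\beta H^X}/\mathrm{Tr}[e^{-\beta H^X}]$. Hamiltonians $H^A=\sum_x a_x|x\rangle\langle x|$, $H^B=\sum_y b_y|y\rangle\langle y|$ are relatively non-degenerate if $a_x-a_{x'}=b_y-b_{y'}$ implies $x=x'$ and $y=y'$. A channel $\mathcal{E}:A\to B$ is time-translation covariant if $\mathcal{E}(e^{-iH^At}\rho e^{iH^At})=e^{-iH^Bt}\mathcal{E}(\rho)e^{iH^Bt}$ for all $t$ and states $\rho$. $\mathrm{GPC}(A\to B)$ is the set of time-translation covariant channels with $\mathcal{E}(\gamma^A)=\gamma^B$. A thermal operation is a channel obtainable by composing: appending systems in their Gibbs states, unitaries on a composite system commuting with its total Hamiltonian, and tracing out subsystems; $\mathrm{CTO}(A\to B)$ is the closure of the set of thermal operations from $A$ to $B$. For probability vectors, $(\mathbf{p},\mathbf{g})\succ(\mathbf{q},\mathbf{g}')$ (relative majorization) means there is a column stochastic matrix $E$ with $E\mathbf{p}=\mathbf{q}$ and $E\mathbf{g}=\mathbf{g}'$. *)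

theory Defs
  imports "HOL-Analysis.Analysis" "Jordan_Normal_Form.Matrix"
begin

(* A physical system is given by the list of energy levels of its Hamiltonian,
   H = diag(a_0,...,a_{n-1}) in the computational (energy eigen-)basis of C^n. *)

definition adj :: "complex mat \<Rightarrow> complex mat" where
  "adj M = mat (dim_col M) (dim_row M) (\<lambda>(i,j). cnj (M $$ (j,i)))"

definition ham :: "real list \<Rightarrow> complex mat" where
  "ham a = mat (length a) (length a) (\<lambda>(i,j). if i = j then complex_of_real (a ! i) else 0)"

definition valid_ham :: "real list \<Rightarrow> bool" where
  "valid_ham a \<longleftrightarrow> a \<noteq> [] \<and> (\<forall>x \<in> set a. 0 \<le> x)"

definition partition_fn :: "real \<Rightarrow> real list \<Rightarrow> real" where
  "partition_fn \<beta> a = (\<Sum>i<length a. exp (- \<beta> * a ! i))"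

definition gibbs :: "real \<Rightarrow> real list \<Rightarrow> complex mat" where
  "gibbs \<beta> a = mat (length a) (length a)
     (\<lambda>(i,j). if i = j then complex_of_real (exp (- \<beta> * a ! i) / partition_fn \<beta> a) else 0)"

definition evol :: "real list \<Rightarrow> real \<Rightarrow> complex mat" where
  "evol a t = mat (length a) (length a)
     (\<lambda>(i,j). if i = j then exp (- \<i> * complex_of_real (a ! i * t)) else 0)"

definition psd :: "nat \<Rightarrow> complex mat \<Rightarrow> bool" where
  "psd n M \<longleftrightarrow> M \<in> carrier_mat n n \<and> adj M = M \<and>
     (\<forall>v :: nat \<Rightarrow> complex. 0 \<le> Re (\<Sum>i<n. \<Sum>j<n. cnj (v i) * M $$ (i,j) * v j))"

definition tr :: "complex mat \<Rightarrow> complex" where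
  "tr M = (\<Sum>i<dim_row M. M $$ (i,i))"

definition is_state :: "nat \<Rightarrow> complex mat \<Rightarrow> bool" where
  "is_state n \<rho> \<longleftrightarrow> psd n \<rho> \<and> tr \<rho> = 1"

(* Kronecker product, index (i,k) \<mapsto> i * dim(second) + k *)
definition kron :: "complex mat \<Rightarrow> complex mat \<Rightarrow> complex mat" where
  "kron M N = mat (dim_row M * dim_row N) (dim_col M * dim_col N)
     (\<lambda>(i,j). M $$ (i div dim_row N, j div dim_col N) * N $$ (i mod dim_row N, j mod dim_col N))"

definition ptrace2 :: "nat \<Rightarrow> nat \<Rightarrow> complex mat \<Rightarrow> complex mat" where
  "ptrace2 m k M = mat m m (\<lambda>(i,j). \<Sum>l<k. M $$ (i * k + l, j * k + l))"

definition ham_comp :: "real list \<Rightarrow> real list \<Rightarrow> complex mat" where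
  "ham_comp a c = kron (ham a) (1\<^sub>m (length c)) + kron (1\<^sub>m (length a)) (ham c)"

definition unitary :: "nat \<Rightarrow> complex mat \<Rightarrow> bool" where
  "unitary n U \<longleftrightarrow> U \<in> carrier_mat n n \<and> adj U * U = 1\<^sub>m n \<and> U * adj U = 1\<^sub>m n"

(* quantum channel (CPTP map) from C^{dA} to C^{dB}, in Kraus form;
   only its action on dA x dA matrices is relevant *)
definition msum :: "nat \<Rightarrow> nat \<Rightarrow> nat \<Rightarrow> (nat \<Rightarrow> complex mat) \<Rightarrow> complex mat" where
  "msum n m r f = mat n m (\<lambda>(i,j). \<Sum>k<r. f k $$ (i,j))"

definition channel :: "nat \<Rightarrow> nat \<Rightarrow> (complex mat \<Rightarrow> complex mat) \<Rightarrow> bool" where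
  "channel dA dB E \<longleftrightarrow> (\<exists>(r::nat) (K :: nat \<Rightarrow> complex mat).
      (\<forall>k < r. K k \<in> carrier_mat dB dA) \<and>
      msum dA dA r (\<lambda>k. adj (K k) * K k) = 1\<^sub>m dA \<and>
      (\<forall>X \<in> carrier_mat dA dA. E X = msum dB dB r (\<lambda>k. K k * X * adj (K k))))"

definition time_cov :: "real list \<Rightarrow> real list \<Rightarrow> (complex mat \<Rightarrow> complex mat) \<Rightarrow> bool" where
  "time_cov a b E \<longleftrightarrow> (\<forall>t :: real. \<forall>\<rho>. is_state (length a) \<rho> \<longrightarrow>
      E (evol a t * \<rho> * adj (evol a t)) = evol b t * E \<rho> * adj (evol b t))"

definition GPC :: "real \<Rightarrow> real list \<Rightarrow> real list \<Rightarrow> (complex mat \<Rightarrow> complex mat) set" where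
  "GPC \<beta> a b = {E. channel (length a) (length b) E \<and> time_cov a b E \<and> E (gibbs \<beta> a) = gibbs \<beta> b}"

(* thermal operation A \<rightarrow> B in its normal form:
   E(X) = Tr_{B'} [ W (X \<otimes> \<gamma>^{A'}) W^\<dagger> ],
   with A A' identified with B B' (energy-preservingly) and W unitary with
   W (H^A + H^{A'}) = (H^B + H^{B'}) W *)
definition thermal_op :: "real \<Rightarrow> real list \<Rightarrow> real list \<Rightarrow> (complex mat \<Rightarrow> complex mat) \<Rightarrow> bool" where
  "thermal_op \<beta> a b E \<longleftrightarrow> (\<exists>c d W.
      valid_ham c \<and> valid_ham d \<and>
      length a * length c = length b * length d \<and>
      unitary (length a * length c) W \<and>
      W * ham_comp a c = ham_comp b d * W \<and>
      (\<forall>X \<in> carrier_mat (length a) (length a).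
         E X = ptrace2 (length b) (length d) (W * kron X (gibbs \<beta> c) * adj W)))"

(* closure of the set of thermal operations (pointwise = norm convergence,
   as the maps are linear on a finite-dimensional space) *)
definition CTO :: "real \<Rightarrow> real list \<Rightarrow> real list \<Rightarrow> (complex mat \<Rightarrow> complex mat) set" where
  "CTO \<beta> a b = {E. channel (length a) (length b) E \<and>
     (\<exists>T :: nat \<Rightarrow> complex mat \<Rightarrow> complex mat. (\<forall>n. thermal_op \<beta> a b (T n)) \<and>
        (\<forall>X \<in> carrier_mat (length a) (length a). \<forall>i < length b. \<forall>j < length b.
           (\<lambda>n. T n X $$ (i,j)) \<longlonglongrightarrow> E X $$ (i,j)))}"

definition rel_nondeg :: "real list \<Rightarrow> real list \<Rightarrow> bool" where
  "rel_nondeg a b \<longleftrightarrow> (\<forall>x < length a. \<forall>x' < length a. \<forall>y < length b. \<forall>y' < length b.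
      a ! x - a ! x' = b ! y - b ! y' \<longrightarrow> x = x' \<and> y = y')"

definition diag_vec :: "complex mat \<Rightarrow> nat \<Rightarrow> real" where
  "diag_vec M i = Re (M $$ (i,i))"

definition rel_maj :: "nat \<Rightarrow> (nat \<Rightarrow> real) \<Rightarrow> (nat \<Rightarrow> real) \<Rightarrow> nat \<Rightarrow> (nat \<Rightarrow> real) \<Rightarrow> (nat \<Rightarrow> real) \<Rightarrow> bool" where
  "rel_maj n p g m q g' \<longleftrightarrow> (\<exists>E :: nat \<Rightarrow> nat \<Rightarrow> real.
      (\<forall>i < m. \<forall>j < n. 0 \<le> E i j) \<and> (\<forall>j < n. (\<Sum>i<m. E i j) = 1) \<and>
      (\<forall>i < m. (\<Sum>j<n. E i j * p j) = q i) \<and>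
      (\<forall>i < m. (\<Sum>j<n. E i j * g j) = g' i))"

end

theory Submission
  imports Defs
begin

lemma sum_eq_single:
  assumes "finite A" "a \<in> A" "\<And>x. x \<in> A \<Longrightarrow> x \<noteq> a \<Longrightarrow> f x = 0"
  shows "sum f A = f a"
  using sum.mono_neutral_right[of A "{a}" f] assms by auto

lemma mult_add_less_mult: "y < m \<Longrightarrow> x < n \<Longrightarrow> y * n + x < m * (n::nat)"
proof -
  assume "y < m" "x < n"
  then have "y * n + x < Suc y * n" by simp
  also have "\<dots> \<le> m * n" using \<open>y < m\<close> by (intro mult_le_mono1) simp
  finally show ?thesis .
qed

lemma mod_less_of_less_mult: "k < m * (n::nat) \<Longrightarrow> k mod n < n"
  by (cases "n = 0") auto

lemma div_mod_mult_add [simp]: "x < (n::nat) \<Longrightarrow> (y * n + x) div n = y \<and> (y * n + x) mod n = x"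
  by simp

lemma sum_lessThan_mult_div_mod:
  "(\<Sum>k<m*n. f (k div n) (k mod n)) = (\<Sum>y<m. \<Sum>x<(n::nat). f y x)"
  by (simp add: sum_mult_product)

lemma index_mult_mat_sum:
  assumes "A \<in> carrier_mat n k" "B \<in> carrier_mat k m" "i < n" "j < m"
  shows "(A * B) $$ (i,j) = (\<Sum>u<k. A $$ (i,u) * B $$ (u,j))"
  using assms by (simp add: scalar_prod_def atLeast0LessThan)

lemma adj_carrier_mat [simp]: "M \<in> carrier_mat n m \<Longrightarrow> adj M \<in> carrier_mat m n"
  by (auto simp: adj_def)

lemma index_adj [simp]: "i < dim_col M \<Longrightarrow> j < dim_row M \<Longrightarrow> adj M $$ (i,j) = cnj (M $$ (j,i))"
  by (auto simp: adj_def)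

lemma dim_adj [simp]: "dim_row (adj M) = dim_col M" "dim_col (adj M) = dim_row M"
  by (auto simp: adj_def)

lemma hermitian_diag_real:
  assumes "adj X = X" "X \<in> carrier_mat n n" "x < n"
  shows "X $$ (x,x) = complex_of_real (diag_vec X x)"
proof -
  have "adj X $$ (x,x) = cnj (X $$ (x,x))" using assms(2,3) by simp
  then have "cnj (X $$ (x,x)) = X $$ (x,x)" using assms(1) by simp
  then show ?thesis unfolding diag_vec_def by (metis Reals_cnj_iff complex_is_Real_iff of_real_Re)
qed

lemma index_sandwich:
  assumes "A \<in> carrier_mat m n" "X \<in> carrier_mat n n" "i < m" "j < m"
  shows "(A * X * adj A) $$ (i,j) = (\<Sum>u<n. \<Sum>v<n. A $$ (i,u) * X $$ (u,v) * cnj (A $$ (j,v)))"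
proof -
  have AX: "A * X \<in> carrier_mat m n" using assms by simp
  have "(A * X * adj A) $$ (i,j) = (\<Sum>v<n. (A * X) $$ (i,v) * adj A $$ (v,j))"
    by (rule index_mult_mat_sum[OF AX adj_carrier_mat[OF assms(1)] assms(3,4)])
  also have "\<dots> = (\<Sum>v<n. (\<Sum>u<n. A $$ (i,u) * X $$ (u,v)) * cnj (A $$ (j,v)))"
    using assms by (intro sum.cong refl, subst index_mult_mat_sum[OF assms(1,2) assms(3)]) auto
  also have "\<dots> = (\<Sum>v<n. \<Sum>u<n. A $$ (i,u) * X $$ (u,v) * cnj (A $$ (j,v)))"
    by (simp add: sum_distrib_right)
  also have "\<dots> = (\<Sum>u<n. \<Sum>v<n. A $$ (i,u) * X $$ (u,v) * cnj (A $$ (j,v)))"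
    by (rule sum.swap)
  finally show ?thesis .
qed

lemma index_diag_mult:
  assumes "X \<in> carrier_mat n m" "i < n" "j < m"
  shows "(mat n n (\<lambda>(i,j). if i = j then f i else 0) * X) $$ (i,j) = f i * X $$ (i,j)"
proof -
  have "(mat n n (\<lambda>(i,j). if i = j then f i else 0) * X) $$ (i,j)
      = (\<Sum>u<n. (if i = u then f i else 0) * X $$ (u,j))"
    using assms by (subst index_mult_mat_sum[of _ n n _ m]) auto
  also have "\<dots> = f i * X $$ (i,j)"
    using assms by (subst sum_eq_single[of _ i]) auto
  finally show ?thesis .
qed

lemma index_mult_diag:
  assumes "X \<in> carrier_mat m n" "i < m" "j < n"
  shows "(X * mat n n (\<lambda>(i,j). if i = j then f i else 0)) $$ (i,j) = X $$ (i,j) * f j"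
proof -
  have "(X * mat n n (\<lambda>(i,j). if i = j then f i else 0)) $$ (i,j)
      = (\<Sum>u<n. X $$ (i,u) * (if u = j then f u else 0))"
    using assms by (subst index_mult_mat_sum[of _ m n _ n]) auto
  also have "\<dots> = X $$ (i,j) * f j"
    using assms by (subst sum_eq_single[of _ j]) auto
  finally show ?thesis .
qed


lemma adj_evol:
  "adj (evol a t) = mat (length a) (length a) (\<lambda>(i,j). if i = j then exp (\<i> * complex_of_real (a ! i * t)) else 0)"
  by (rule eq_matI) (auto simp: adj_def evol_def exp_cnj)

lemma evol_carrier [simp]: "evol a t \<in> carrier_mat (length a) (length a)"
  by (simp add: evol_def)

lemma index_evol_conj:
  assumes "X \<in> carrier_mat (length a) (length a)" "u < length a" "v < length a"
  shows "(evol a t * X * adj (evol a t)) $$ (u,v) = X $$ (u,v) * exp (- \<i> * complex_of_real ((a!u - a!v) * t))"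
proof -
  have "evol a t * X \<in> carrier_mat (length a) (length a)" using assms(1) by (metis evol_carrier mult_carrier_mat)
  then have "(evol a t * X * adj (evol a t)) $$ (u,v) = (evol a t * X) $$ (u,v) * exp (\<i> * complex_of_real (a ! v * t))"
    unfolding adj_evol using assms(2,3) by (rule index_mult_diag)
  also have "(evol a t * X) $$ (u,v) = exp (- \<i> * complex_of_real (a ! u * t)) * X $$ (u,v)"
    unfolding evol_def using assms by (rule index_diag_mult)
  also have "exp (- \<i> * complex_of_real (a ! u * t)) * X $$ (u,v) * exp (\<i> * complex_of_real (a ! v * t))
     = X $$ (u,v) * (exp (- \<i> * complex_of_real (a ! u * t)) * exp (\<i> * complex_of_real (a ! v * t)))"
    by simp
  also have "exp (- \<i> * complex_of_real (a ! u * t)) * exp (\<i> * complex_of_real (a ! v * t))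
     = exp (- \<i> * complex_of_real ((a!u - a!v) * t))"
    by (simp add: exp_add[symmetric] algebra_simps)
  finally show ?thesis .
qed

lemma partition_fn_pos: "valid_ham a \<Longrightarrow> partition_fn \<beta> a > 0"
  unfolding partition_fn_def valid_ham_def by (intro sum_pos) auto

lemma gibbs_carrier [simp]: "gibbs \<beta> a \<in> carrier_mat (length a) (length a)"
  by (simp add: gibbs_def)

lemma dim_gibbs [simp]: "dim_row (gibbs \<beta> a) = length a" "dim_col (gibbs \<beta> a) = length a"
  by (simp_all add: gibbs_def)

lemma index_gibbs:
  "i < length a \<Longrightarrow> j < length a \<Longrightarrow>
   gibbs \<beta> a $$ (i,j) = (if i = j then complex_of_real (exp (- \<beta> * a ! i) / partition_fn \<beta> a) else 0)"
  by (simp add: gibbs_def)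

lemma diag_vec_gibbs: "i < length a \<Longrightarrow> diag_vec (gibbs \<beta> a) i = exp (- \<beta> * a ! i) / partition_fn \<beta> a"
  by (simp add: diag_vec_def index_gibbs)

lemma adj_gibbs: "adj (gibbs \<beta> a) = gibbs \<beta> a"
  by (rule eq_matI) (auto simp: adj_def gibbs_def)

lemma gibbs_diagonal: "diagonal_mat (gibbs \<beta> a)"
  unfolding diagonal_mat_def by (simp add: index_gibbs)

lemma gibbs_is_state:
  assumes "valid_ham a"
  shows "is_state (length a) (gibbs \<beta> a)"
proof -
  let ?n = "length a" and ?Z = "partition_fn \<beta> a"
  have Z: "?Z > 0" using partition_fn_pos[OF assms] .
  have "0 \<le> Re (\<Sum>i<?n. \<Sum>j<?n. cnj (v i) * gibbs \<beta> a $$ (i,j) * v j)" for v :: "nat \<Rightarrow> complex"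
  proof -
    have "(\<Sum>i<?n. \<Sum>j<?n. cnj (v i) * gibbs \<beta> a $$ (i,j) * v j)
        = (\<Sum>i<?n. complex_of_real (exp (- \<beta> * a ! i) / ?Z) * (v i * cnj (v i)))"
      by (intro sum.cong refl, subst sum_eq_single) (auto simp: index_gibbs)
    also have "\<dots> = (\<Sum>i<?n. complex_of_real (exp (- \<beta> * a ! i) / ?Z * (cmod (v i))\<^sup>2))"
      by (simp only: complex_norm_square[symmetric] of_real_mult)
    also have "Re \<dots> = (\<Sum>i<?n. exp (- \<beta> * a ! i) / ?Z * (cmod (v i))\<^sup>2)"
      by (simp only: Re_sum Re_complex_of_real)
    finally show ?thesis using Z by (simp add: sum_nonneg)
  qed
  moreover have "tr (gibbs \<beta> a) = 1"
  proof -
    have "tr (gibbs \<beta> a) = complex_of_real ((\<Sum>i<?n. exp (- \<beta> * a ! i)) / ?Z)"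
      by (simp add: tr_def index_gibbs sum_divide_distrib)
    then show ?thesis using Z by (simp add: partition_fn_def)
  qed
  ultimately show ?thesis unfolding is_state_def psd_def using adj_gibbs by auto
qed


lemma cesaro_mean_powers_tendsto:
  fixes z :: complex
  assumes "norm z = 1"
  shows "(\<lambda>N. (\<Sum>n<Suc N. z^n) / of_nat (Suc N)) \<longlonglongrightarrow> (if z = 1 then 1 else 0)"
proof (cases "z = 1")
  case True
  have "(\<Sum>n<Suc N. z^n) / of_nat (Suc N) = 1" for N
    using True of_nat_neq_0[of N, where 'a=complex] by (simp del: of_nat_Suc)
  then show ?thesis using True by simp
next
  case False
  let ?C = "2 / norm (1 - z)"
  have "norm (\<Sum>n<Suc N. z^n) \<le> ?C" for N
  proof -
    have "norm (\<Sum>n<Suc N. z^n) = norm ((1 - z^Suc N) / (1 - z))"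
      by (simp only: sum_gp_strict False if_False)
    also have "\<dots> = norm (1 - z^Suc N) / norm (1 - z)" by (simp add: norm_divide)
    also have "\<dots> \<le> ?C"
    proof (rule divide_right_mono)
      have "norm (1 - z^Suc N) \<le> norm (1::complex) + norm (z^Suc N)" by (rule norm_triangle_ineq4)
      also have "\<dots> = 2" using assms by (simp add: norm_power del: power_Suc)
      finally show "norm (1 - z^Suc N) \<le> 2" .
    qed simp
    finally show ?thesis .
  qed
  then have bound: "norm ((\<Sum>n<Suc N. z^n) / of_nat (Suc N)) \<le> ?C * inverse (real (Suc N))" for N
    by (simp only: norm_divide norm_of_nat divide_inverse[symmetric]) (intro divide_right_mono, auto)
  have "(\<lambda>N. (\<Sum>n<Suc N. z^n) / of_nat (Suc N)) \<longlonglongrightarrow> 0"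
  proof (rule Lim_null_comparison)
    show "\<forall>\<^sub>F N in sequentially. norm ((\<Sum>n<Suc N. z^n) / of_nat (Suc N)) \<le> ?C * inverse (real (Suc N))"
      using bound by (intro always_eventually allI)
    show "(\<lambda>N. ?C * inverse (real (Suc N))) \<longlonglongrightarrow> 0"
      using tendsto_mult[OF tendsto_const LIMSEQ_inverse_real_of_nat, of ?C] by simp
  qed
  then show ?thesis using False by simp
qed

lemma exp_i_eq_1_iff_small:
  assumes "\<bar>x\<bar> < 2 * pi"
  shows "exp (\<i> * complex_of_real x) = 1 \<longleftrightarrow> x = 0"
proof
  assume "exp (\<i> * complex_of_real x) = 1"
  then obtain k :: int where k: "x = of_int (2 * k) * pi"
    unfolding exp_eq_1 by auto
  have "k = 0"
  proof (rule ccontr)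
    assume "k \<noteq> 0"
    then have "\<bar>real_of_int (2 * k)\<bar> \<ge> 2" by linarith
    then have "\<bar>x\<bar> \<ge> 2 * pi" unfolding k by (simp add: abs_mult)
    then show False using assms by simp
  qed
  then show "x = 0" using k by simp
qed simp

text \<open>Sampling at the times \<open>n \<tau>\<close> for a step \<open>\<tau>\<close> small enough that no frequency
  difference \<open>\<theta> i - \<omega>\<close> is aliased to zero, the Cesaro means isolate the frequency \<open>\<omega>\<close>.\<close>

lemma frequency_component:
  fixes c :: "'i \<Rightarrow> complex" and \<theta> :: "'i \<Rightarrow> real"
  assumes fin: "finite I"
    and eq: "\<And>t. (\<Sum>i\<in>I. c i * exp (- \<i> * complex_of_real (\<theta> i * t))) = d * exp (- \<i> * complex_of_real (\<omega> * t))"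
  shows "d = (\<Sum>i\<in>{i\<in>I. \<theta> i = \<omega>}. c i)"
proof -
  define S where "S = (\<Sum>i\<in>I. \<bar>\<theta> i - \<omega>\<bar>)"
  have S0: "S \<ge> 0" unfolding S_def by (simp add: sum_nonneg)
  define \<tau> where "\<tau> = 1 / (1 + S)"
  have \<tau>0: "\<tau> > 0" using S0 by (simp add: \<tau>_def)
  define z where "z i = exp (\<i> * complex_of_real ((\<omega> - \<theta> i) * \<tau>))" for i
  have z1: "z i = 1 \<longleftrightarrow> \<theta> i = \<omega>" if "i \<in> I" for i
  proof -
    have "\<bar>\<theta> i - \<omega>\<bar> \<le> S" unfolding S_def using fin that by (auto intro: member_le_sum)
    then have "\<bar>(\<omega> - \<theta> i) * \<tau>\<bar> < 1" using S0 \<tau>0 by (simp add: \<tau>_def abs_mult field_simps)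
    then have "\<bar>(\<omega> - \<theta> i) * \<tau>\<bar> < 2 * pi" using pi_gt3 by linarith
    then show ?thesis unfolding z_def using \<tau>0 by (subst exp_i_eq_1_iff_small) auto
  qed
  have sample: "(\<Sum>i\<in>I. c i * z i ^ n) = d" for n
  proof -
    define t where "t = real n * \<tau>"
    have zn: "z i ^ n = exp (- \<i> * complex_of_real (\<theta> i * t)) * exp (\<i> * complex_of_real (\<omega> * t))" for i
      unfolding z_def t_def by (simp add: exp_of_nat_mult[symmetric] exp_add[symmetric] algebra_simps)
    have "(\<Sum>i\<in>I. c i * z i ^ n)
        = (\<Sum>i\<in>I. c i * exp (- \<i> * complex_of_real (\<theta> i * t))) * exp (\<i> * complex_of_real (\<omega> * t))"
      by (simp add: zn sum_distrib_right mult.assoc)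
    also have "\<dots> = d * (exp (- \<i> * complex_of_real (\<omega> * t)) * exp (\<i> * complex_of_real (\<omega> * t)))"
      by (simp only: eq mult.assoc)
    also have "\<dots> = d" by (simp add: exp_add[symmetric])
    finally show ?thesis .
  qed
  have "(\<lambda>N. \<Sum>i\<in>I. c i * ((\<Sum>n<Suc N. z i ^ n) / of_nat (Suc N)))
        \<longlonglongrightarrow> (\<Sum>i\<in>I. c i * (if z i = 1 then 1 else 0))"
    by (intro tendsto_sum tendsto_mult tendsto_const cesaro_mean_powers_tendsto) (simp add: z_def norm_exp_eq_Re)
  moreover have "(\<Sum>i\<in>I. c i * ((\<Sum>n<Suc N. z i ^ n) / of_nat (Suc N))) = d" for N
  proof -
    have "(\<Sum>i\<in>I. c i * ((\<Sum>n<Suc N. z i ^ n) / of_nat (Suc N)))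
        = (\<Sum>n<Suc N. \<Sum>i\<in>I. c i * z i ^ n) / of_nat (Suc N)"
      by (simp only: sum_divide_distrib[symmetric] times_divide_eq_right sum_distrib_left sum.swap[of _ I])
    then show ?thesis using of_nat_neq_0[of N, where 'a=complex] by (simp add: sample del: of_nat_Suc)
  qed
  ultimately have "d = (\<Sum>i\<in>I. c i * (if z i = 1 then 1 else 0))" by (simp add: LIMSEQ_const_iff)
  also have "\<dots> = (\<Sum>i\<in>I. if \<theta> i = \<omega> then c i else 0)"
    by (rule sum.cong) (auto simp: z1)
  also have "\<dots> = (\<Sum>i\<in>{i\<in>I. \<theta> i = \<omega>}. c i)"
    using fin by (simp add: sum.inter_filter)
  finally show ?thesis .
qed

definition proj_mat :: "nat \<Rightarrow> nat \<Rightarrow> complex mat" where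
  "proj_mat n x = mat n n (\<lambda>(i,j). if i = x \<and> j = x then 1 else 0)"

lemma proj_mat_carrier [simp]: "proj_mat n x \<in> carrier_mat n n"
  by (simp add: proj_mat_def)

definition transition :: "nat \<Rightarrow> (complex mat \<Rightarrow> complex mat) \<Rightarrow> nat \<Rightarrow> nat \<Rightarrow> real" where
  "transition n E y x = Re (E (proj_mat n x) $$ (y,y))"

definition diag_action :: "nat \<Rightarrow> nat \<Rightarrow> (complex mat \<Rightarrow> complex mat) \<Rightarrow> complex mat \<Rightarrow> bool" where
  "diag_action n m E X \<longleftrightarrow> (\<forall>y<m. \<forall>y'<m. E X $$ (y,y') =
      (if y = y' then (\<Sum>x<n. X $$ (x,x) * E (proj_mat n x) $$ (y,y)) else 0))"

lemma index_msum: "i < n \<Longrightarrow> j < m \<Longrightarrow> msum n m r f $$ (i,j) = (\<Sum>k<r. f k $$ (i,j))"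
  by (simp add: msum_def)

lemma msum_carrier [simp]: "msum n m r f \<in> carrier_mat n m"
  by (simp add: msum_def)

lemma index_kraus_sum:
  assumes "\<forall>k < r. K k \<in> carrier_mat m n" "X \<in> carrier_mat n n" "i < m" "j < m"
  shows "msum m m r (\<lambda>k. K k * X * adj (K k)) $$ (i,j) =
     (\<Sum>k<r. \<Sum>u<n. \<Sum>v<n. K k $$ (i,u) * X $$ (u,v) * cnj (K k $$ (j,v)))"
proof -
  have "(K k * X * adj (K k)) $$ (i,j) = (\<Sum>u<n. \<Sum>v<n. K k $$ (i,u) * X $$ (u,v) * cnj (K k $$ (j,v)))"
    if "k < r" for k
    using assms that by (intro index_sandwich) auto
  then show ?thesis using assms(3,4) by (simp add: index_msum)
qed

lemma index_kraus_sum_proj: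
  assumes K: "\<forall>k < r. K k \<in> carrier_mat m n" and x: "x < n" and y: "y < m"
  shows "msum m m r (\<lambda>k. K k * proj_mat n x * adj (K k)) $$ (y,y) =
     complex_of_real (\<Sum>k<r. (cmod (K k $$ (y,x)))\<^sup>2)"
proof -
  have single: "(\<Sum>u<n. \<Sum>v<n. K k $$ (y,u) * proj_mat n x $$ (u,v) * cnj (K k $$ (y,v)))
      = K k $$ (y,x) * cnj (K k $$ (y,x))" for k
  proof -
    have "(\<Sum>u<n. \<Sum>v<n. K k $$ (y,u) * proj_mat n x $$ (u,v) * cnj (K k $$ (y,v)))
        = (\<Sum>u<n. if u = x then K k $$ (y,x) * cnj (K k $$ (y,x)) else 0)"
      using x by (intro sum.cong refl, subst sum_eq_single[of _ x]) (auto simp: proj_mat_def)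
    then show ?thesis using x by simp
  qed
  have "msum m m r (\<lambda>k. K k * proj_mat n x * adj (K k)) $$ (y,y) = (\<Sum>k<r. K k $$ (y,x) * cnj (K k $$ (y,x)))"
    by (simp only: index_kraus_sum[OF K proj_mat_carrier y y] single)
  then show ?thesis by (simp only: of_real_sum complex_norm_square)
qed

lemma kraus_column_sum:
  assumes K: "\<forall>k < r. K k \<in> carrier_mat m n" and x: "x < n"
    and complete: "msum n n r (\<lambda>k. adj (K k) * K k) = 1\<^sub>m n"
  shows "(\<Sum>y<m. \<Sum>k<r. (cmod (K k $$ (y,x)))\<^sup>2) = 1"
proof -
  have "1 = msum n n r (\<lambda>k. adj (K k) * K k) $$ (x,x)" using complete x by simp
  also have "\<dots> = (\<Sum>k<r. (adj (K k) * K k) $$ (x,x))" using x by (simp add: index_msum)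
  also have "\<dots> = (\<Sum>k<r. \<Sum>y<m. K k $$ (y,x) * cnj (K k $$ (y,x)))"
    using K x by (intro sum.cong refl, subst index_mult_mat_sum[of _ n m _ n]) (auto simp: mult.commute)
  also have "\<dots> = (\<Sum>y<m. \<Sum>k<r. K k $$ (y,x) * cnj (K k $$ (y,x)))"
    by (rule sum.swap)
  also have "\<dots> = complex_of_real (\<Sum>y<m. \<Sum>k<r. (cmod (K k $$ (y,x)))\<^sup>2)"
    by (simp only: of_real_sum complex_norm_square)
  finally have "complex_of_real (\<Sum>y<m. \<Sum>k<r. (cmod (K k $$ (y,x)))\<^sup>2) = 1" by (rule sym)
  then show ?thesis by (simp only: of_real_eq_1_iff)
qed

lemma
  assumes "channel n m E" "x < n"
  shows channel_proj_diag: "y < m \<Longrightarrow> E (proj_mat n x) $$ (y,y) = complex_of_real (transition n E y x)"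
    and transition_nonneg: "y < m \<Longrightarrow> transition n E y x \<ge> 0"
    and transition_sum: "(\<Sum>y<m. transition n E y x) = 1"
proof -
  obtain r K where K: "\<forall>k < r. K k \<in> carrier_mat m n"
    and complete: "msum n n r (\<lambda>k. adj (K k) * K k) = 1\<^sub>m n"
    and E: "\<forall>X \<in> carrier_mat n n. E X = msum m m r (\<lambda>k. K k * X * adj (K k))"
    using assms(1) unfolding channel_def by blast
  have e: "E (proj_mat n x) $$ (y,y) = complex_of_real (\<Sum>k<r. (cmod (K k $$ (y,x)))\<^sup>2)" if "y < m" for y
    using index_kraus_sum_proj[OF K assms(2) that] E by simp
  then show "y < m \<Longrightarrow> E (proj_mat n x) $$ (y,y) = complex_of_real (transition n E y x)"
    and "y < m \<Longrightarrow> transition n E y x \<ge> 0"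
    by (simp_all add: transition_def sum_nonneg)
  show "(\<Sum>y<m. transition n E y x) = 1"
    using kraus_column_sum[OF K assms(2) complete] by (simp add: transition_def e)
qed

lemma diag_vec_diag_action:
  assumes "channel n m E" "adj X = X" "X \<in> carrier_mat n n" "diag_action n m E X" "y < m"
  shows "diag_vec (E X) y = (\<Sum>x<n. transition n E y x * diag_vec X x)"
proof -
  have "E X $$ (y,y) = (\<Sum>x<n. X $$ (x,x) * E (proj_mat n x) $$ (y,y))"
    using assms(4,5) unfolding diag_action_def by auto
  also have "\<dots> = (\<Sum>x<n. complex_of_real (transition n E y x * diag_vec X x))"
    using hermitian_diag_real[OF assms(2,3)] channel_proj_diag[OF assms(1) _ assms(5)]
    by (intro sum.cong refl) (simp add: mult.commute)
  finally show ?thesis unfolding diag_vec_def by (simp add: Re_sum)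
qed

lemma rel_maj_if_diag_action:
  assumes ch: "channel n m E" and X: "adj X = X" "X \<in> carrier_mat n n" "diag_action n m E X"
    and G: "adj G = G" "G \<in> carrier_mat n n" "diag_action n m E G"
    and EX: "E X \<in> carrier_mat m m"
  shows "diagonal_mat (E X) \<and> rel_maj n (diag_vec X) (diag_vec G) m (diag_vec (E X)) (diag_vec (E G))"
proof
  show "diagonal_mat (E X)" using X(3) EX unfolding diag_action_def diagonal_mat_def by auto
  show "rel_maj n (diag_vec X) (diag_vec G) m (diag_vec (E X)) (diag_vec (E G))"
    unfolding rel_maj_def
    using transition_nonneg[OF ch] transition_sum[OF ch] diag_vec_diag_action[OF ch X]
      diag_vec_diag_action[OF ch G]
    by (intro exI[of _ "transition n E"]) auto
qed


lemma covariant_kraus_entry: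
  assumes K: "\<forall>k < r. K k \<in> carrier_mat (length b) (length a)"
    and E: "\<forall>X \<in> carrier_mat (length a) (length a). E X = msum (length b) (length b) r (\<lambda>k. K k * X * adj (K k))"
    and tc: "time_cov a b E" and st: "is_state (length a) X"
    and y: "y < length b" and y': "y' < length b"
  shows "E X $$ (y,y') = (\<Sum>(u,v)\<in>{(u,v) \<in> {..<length a} \<times> {..<length a}. a!u - a!v = b!y - b!y'}.
           X $$ (u,v) * (\<Sum>k<r. K k $$ (y,u) * cnj (K k $$ (y',v))))"
proof -
  let ?n = "length a" and ?m = "length b"
  define c where "c = (\<lambda>(u,v). X $$ (u,v) * (\<Sum>k<r. K k $$ (y,u) * cnj (K k $$ (y',v))))"
  define \<theta> where "\<theta> = (\<lambda>(u,v). a!u - a!v)"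
  have Xc: "X \<in> carrier_mat ?n ?n" using st unfolding is_state_def psd_def by auto
  have "(\<Sum>i\<in>{..<?n} \<times> {..<?n}. c i * exp (- \<i> * complex_of_real (\<theta> i * t)))
      = E X $$ (y,y') * exp (- \<i> * complex_of_real ((b!y - b!y') * t))" for t
  proof -
    let ?U = "evol a t * X * adj (evol a t)"
    have Uc: "?U \<in> carrier_mat ?n ?n" using Xc by (metis adj_carrier_mat evol_carrier mult_carrier_mat)
    have "E ?U $$ (y,y') = (\<Sum>k<r. \<Sum>u<?n. \<Sum>v<?n. K k $$ (y,u) *
        (X $$ (u,v) * exp (- \<i> * complex_of_real ((a!u - a!v) * t))) * cnj (K k $$ (y',v)))"
      using E Uc index_kraus_sum[OF K Uc y y'] by (simp add: index_evol_conj[OF Xc])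
    also have "\<dots> = (\<Sum>u<?n. \<Sum>v<?n. c (u,v) * exp (- \<i> * complex_of_real (\<theta> (u,v) * t)))"
      unfolding c_def \<theta>_def
      by (simp add: sum.swap[of _ "{..<r}"] sum_distrib_left sum_distrib_right algebra_simps)
    also have "\<dots> = (\<Sum>i\<in>{..<?n} \<times> {..<?n}. c i * exp (- \<i> * complex_of_real (\<theta> i * t)))"
      by (simp add: sum.cartesian_product)
    finally have "E ?U $$ (y,y') = \<dots>" .
    moreover have "E ?U = evol b t * E X * adj (evol b t)" using tc st unfolding time_cov_def by blast
    moreover have "E X \<in> carrier_mat ?m ?m" using E Xc by simp
    ultimately show ?thesis using index_evol_conj[of "E X" b y y' t] y y' by simp
  qed
  then have "E X $$ (y,y') = (\<Sum>i\<in>{i \<in> {..<?n} \<times> {..<?n}. \<theta> i = b!y - b!y'}. c i)"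
    by (intro frequency_component) auto
  also have "{i \<in> {..<?n} \<times> {..<?n}. \<theta> i = b!y - b!y'} = {(u,v) \<in> {..<?n} \<times> {..<?n}. a!u - a!v = b!y - b!y'}"
    by (auto simp: \<theta>_def)
  finally show ?thesis unfolding c_def .
qed

text \<open>Relative non-degeneracy leaves only the diagonal terms \<open>u = v\<close> (for \<open>y = y'\<close>) in the
  expansion above: a covariant channel dephases.\<close>

lemma covariant_channel_diag_action:
  assumes nd: "rel_nondeg a b" and ch: "channel (length a) (length b) E" and tc: "time_cov a b E"
    and st: "is_state (length a) X"
  shows "diag_action (length a) (length b) E X"
  unfolding diag_action_def
proof (intro allI impI)
  let ?n = "length a" and ?m = "length b"
  fix y y' assume y: "y < ?m" and y': "y' < ?m"
  obtain r K where K: "\<forall>k < r. K k \<in> carrier_mat ?m ?n"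
    and E: "\<forall>X \<in> carrier_mat ?n ?n. E X = msum ?m ?m r (\<lambda>k. K k * X * adj (K k))"
    using ch unfolding channel_def by blast
  let ?S = "{(u,v) \<in> {..<?n} \<times> {..<?n}. a!u - a!v = b!y - b!y'}"
  have entry: "E X $$ (y,y') = (\<Sum>(u,v)\<in>?S. X $$ (u,v) * (\<Sum>k<r. K k $$ (y,u) * cnj (K k $$ (y',v))))"
    by (rule covariant_kraus_entry[OF K E tc st y y'])
  show "E X $$ (y,y') = (if y = y' then (\<Sum>x<?n. X $$ (x,x) * E (proj_mat ?n x) $$ (y,y)) else 0)"
  proof (cases "y = y'")
    case False
    then have S: "?S = {}" using nd y y' unfolding rel_nondeg_def by auto
    show ?thesis unfolding entry S using False by simp
  next
    case True
    then have "?S = (\<lambda>u. (u,u)) ` {..<?n}" using nd y unfolding rel_nondeg_def by auto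
    then have "E X $$ (y,y') = (\<Sum>x<?n. X $$ (x,x) * (\<Sum>k<r. K k $$ (y,x) * cnj (K k $$ (y,x))))"
      using entry True by (simp add: sum.reindex inj_on_def)
    also have "\<dots> = (\<Sum>x<?n. X $$ (x,x) * E (proj_mat ?n x) $$ (y,y))"
    proof (rule sum.cong[OF refl])
      fix x assume "x \<in> {..<?n}"
      then have "E (proj_mat ?n x) $$ (y,y) = complex_of_real (\<Sum>k<r. (cmod (K k $$ (y,x)))\<^sup>2)"
        using index_kraus_sum_proj[OF K _ y] E by simp
      also have "\<dots> = (\<Sum>k<r. K k $$ (y,x) * cnj (K k $$ (y,x)))"
        by (simp only: of_real_sum complex_norm_square)
      finally show "X $$ (x,x) * (\<Sum>k<r. K k $$ (y,x) * cnj (K k $$ (y,x))) = X $$ (x,x) * E (proj_mat ?n x) $$ (y,y)"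
        by simp
    qed
    finally show ?thesis using True by simp
  qed
qed


lemma index_kron:
  assumes "i < dim_row M * dim_row N" "j < dim_col M * dim_col N"
  shows "kron M N $$ (i,j) = M $$ (i div dim_row N, j div dim_col N) * N $$ (i mod dim_row N, j mod dim_col N)"
  using assms by (simp add: kron_def)

lemma kron_carrier [simp]:
  "M \<in> carrier_mat a b \<Longrightarrow> N \<in> carrier_mat c d \<Longrightarrow> kron M N \<in> carrier_mat (a*c) (b*d)"
  by (auto simp: kron_def)

lemma ham_comp_diag:
  "ham_comp a c = mat (length a * length c) (length a * length c)
     (\<lambda>(i,j). if i = j then complex_of_real (a ! (i div length c) + c ! (i mod length c)) else 0)"
proof (rule eq_matI)
  let ?nc = "length c" and ?n = "length a"
  fix i j assume "i < dim_row (mat (?n * ?nc) (?n * ?nc)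
     (\<lambda>(i,j). if i = j then complex_of_real (a ! (i div ?nc) + c ! (i mod ?nc)) else 0))"
    and "j < dim_col (mat (?n * ?nc) (?n * ?nc)
     (\<lambda>(i,j). if i = j then complex_of_real (a ! (i div ?nc) + c ! (i mod ?nc)) else 0))"
  then have ij: "i < ?n * ?nc" "j < ?n * ?nc" by auto
  then have "i div ?nc < ?n" "j div ?nc < ?n" "i mod ?nc < ?nc" "j mod ?nc < ?nc"
    using less_mult_imp_div_less mod_less_of_less_mult by auto
  moreover have "i = j \<longleftrightarrow> i div ?nc = j div ?nc \<and> i mod ?nc = j mod ?nc"
    by (metis div_mult_mod_eq)
  ultimately show "ham_comp a c $$ (i,j) = mat (?n * ?nc) (?n * ?nc)
     (\<lambda>(i,j). if i = j then complex_of_real (a ! (i div ?nc) + c ! (i mod ?nc)) else 0) $$ (i,j)"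
    using ij by (auto simp: ham_comp_def kron_def ham_def)
qed (auto simp: ham_comp_def kron_def ham_def)

lemma energy_preserving_entry:
  assumes W: "W \<in> carrier_mat N N" and N: "N = length a * length c" "N = length b * length d"
    and eq: "W * ham_comp a c = ham_comp b d * W" and i: "i < N" and p: "p < N"
    and nz: "W $$ (i,p) \<noteq> 0"
  shows "b ! (i div length d) + d ! (i mod length d) = a ! (p div length c) + c ! (p mod length c)"
proof -
  have "(W * ham_comp a c) $$ (i,p) = W $$ (i,p) * complex_of_real (a ! (p div length c) + c ! (p mod length c))"
    unfolding ham_comp_diag using W N i p by (intro index_mult_diag) auto
  moreover have "(ham_comp b d * W) $$ (i,p) = complex_of_real (b ! (i div length d) + d ! (i mod length d)) * W $$ (i,p)"
    unfolding ham_comp_diag using W N i p by (intro index_diag_mult) auto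
  ultimately have "W $$ (i,p) * complex_of_real (b ! (i div length d) + d ! (i mod length d))
      = W $$ (i,p) * complex_of_real (a ! (p div length c) + c ! (p mod length c))"
    using eq by (metis mult.commute)
  then show ?thesis using nz by (simp only: mult_cancel_left of_real_eq_iff) simp
qed

lemma thermal_cross_term_zero:
  assumes nd: "rel_nondeg a b" and W: "W \<in> carrier_mat N N"
    and N: "N = length a * length c" "N = length b * length d"
    and eq: "W * ham_comp a c = ham_comp b d * W"
    and y: "y < length b" and y': "y' < length b" and l: "l < length d" and p: "p < N" and q: "q < N"
    and ne: "p \<noteq> q \<or> y \<noteq> y'"
  shows "W $$ (y * length d + l, p) * gibbs \<beta> c $$ (p mod length c, q mod length c)
           * cnj (W $$ (y' * length d + l, q)) = 0"
proof (rule ccontr)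
  let ?lc = "length c" and ?ld = "length d"
  assume "\<not> ?thesis"
  then have w: "W $$ (y * ?ld + l, p) \<noteq> 0" "W $$ (y' * ?ld + l, q) \<noteq> 0"
    and g: "gibbs \<beta> c $$ (p mod ?lc, q mod ?lc) \<noteq> 0" by auto
  have pq: "p div ?lc < length a" "q div ?lc < length a" "p mod ?lc < ?lc" "q mod ?lc < ?lc"
    using p q N less_mult_imp_div_less mod_less_of_less_mult by auto
  then have m: "p mod ?lc = q mod ?lc" using g by (auto simp: index_gibbs split: if_splits)
  have i: "y * ?ld + l < N" "y' * ?ld + l < N" using mult_add_less_mult[OF y l] mult_add_less_mult[OF y' l] N by auto
  have "b ! y + d ! l = a ! (p div ?lc) + c ! (p mod ?lc)"
    using energy_preserving_entry[OF W N eq i(1) p w(1)] l by simp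
  moreover have "b ! y' + d ! l = a ! (q div ?lc) + c ! (q mod ?lc)"
    using energy_preserving_entry[OF W N eq i(2) q w(2)] l by simp
  ultimately have "a ! (p div ?lc) - a ! (q div ?lc) = b ! y - b ! y'" using m by simp
  then have "p div ?lc = q div ?lc \<and> y = y'" using nd pq y y' unfolding rel_nondeg_def by blast
  then show False using m ne by (metis div_mult_mod_eq)
qed

lemma index_thermal_op:
  assumes nd: "rel_nondeg a b" and W: "W \<in> carrier_mat N N"
    and N: "N = length a * length c" "N = length b * length d"
    and eq: "W * ham_comp a c = ham_comp b d * W"
    and X: "X \<in> carrier_mat (length a) (length a)" and y: "y < length b" and y': "y' < length b"
  shows "ptrace2 (length b) (length d) (W * kron X (gibbs \<beta> c) * adj W) $$ (y,y') =
    (if y = y' then (\<Sum>l<length d. \<Sum>p<N. X $$ (p div length c, p div length c) *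
        (complex_of_real ((cmod (W $$ (y * length d + l, p)))\<^sup>2) * gibbs \<beta> c $$ (p mod length c, p mod length c))) else 0)"
proof -
  let ?lc = "length c" and ?ld = "length d"
  let ?K = "kron X (gibbs \<beta> c)"
  define tm where "tm l p q = W $$ (y * ?ld + l, p) * ?K $$ (p,q) * cnj (W $$ (y' * ?ld + l, q))" for l p q
  have Kc: "?K \<in> carrier_mat N N" using X N by simp
  have Kidx: "?K $$ (p,q) = X $$ (p div ?lc, q div ?lc) * gibbs \<beta> c $$ (p mod ?lc, q mod ?lc)"
    if "p < N" "q < N" for p q
    using that X N by (subst index_kron) auto
  have "(W * ?K * adj W) $$ (y * ?ld + l, y' * ?ld + l) = (\<Sum>p<N. \<Sum>q<N. tm l p q)" if "l < ?ld" for l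
    using mult_add_less_mult[OF y that] mult_add_less_mult[OF y' that] N
    unfolding tm_def by (intro index_sandwich[OF W Kc]) auto
  then have trace: "ptrace2 (length b) ?ld (W * ?K * adj W) $$ (y,y') = (\<Sum>l<?ld. \<Sum>p<N. \<Sum>q<N. tm l p q)"
    using y y' by (simp add: ptrace2_def)
  have zero: "tm l p q = 0" if "l < ?ld" "p < N" "q < N" "p \<noteq> q \<or> y \<noteq> y'" for l p q
    using thermal_cross_term_zero[OF nd W N eq y y' that, of \<beta>] Kidx[OF that(2,3)]
    unfolding tm_def by auto
  show ?thesis
  proof (cases "y = y'")
    case False
    then show ?thesis unfolding trace using zero by (simp add: sum.neutral)
  next
    case True
    have "(\<Sum>q<N. tm l p q) = tm l p p" if "l < ?ld" "p < N" for l p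
      using that zero by (intro sum_eq_single) auto
    moreover have "tm l p p = X $$ (p div ?lc, p div ?lc) *
        (complex_of_real ((cmod (W $$ (y * ?ld + l, p)))\<^sup>2) * gibbs \<beta> c $$ (p mod ?lc, p mod ?lc))"
      if "p < N" for l p
      using that True complex_norm_square[of "W $$ (y * ?ld + l, p)"] by (simp add: tm_def Kidx mult_ac)
    ultimately show ?thesis unfolding trace using True by simp
  qed
qed


lemma thermal_op_diag_action:
  assumes nd: "rel_nondeg a b" and T: "thermal_op \<beta> a b T" and X: "X \<in> carrier_mat (length a) (length a)"
  shows "diag_action (length a) (length b) T X"
proof -
  let ?la = "length a" and ?lb = "length b"
  obtain c d W where N: "length a * length c = length b * length d"
    and U: "unitary (length a * length c) W" and eq: "W * ham_comp a c = ham_comp b d * W"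
    and Tf: "\<forall>X \<in> carrier_mat ?la ?la. T X = ptrace2 ?lb (length d) (W * kron X (gibbs \<beta> c) * adj W)"
    using T unfolding thermal_op_def by blast
  let ?N = "length a * length c" and ?lc = "length c" and ?ld = "length d"
  have W: "W \<in> carrier_mat ?N ?N" using U unfolding unitary_def by simp
  define w where "w y l p = complex_of_real ((cmod (W $$ (y * ?ld + l, p)))\<^sup>2) * gibbs \<beta> c $$ (p mod ?lc, p mod ?lc)" for y l p
  have F: "T Y $$ (y,y') = (if y = y' then (\<Sum>l<?ld. \<Sum>p<?N. Y $$ (p div ?lc, p div ?lc) * w y l p) else 0)"
    if "Y \<in> carrier_mat ?la ?la" "y < ?lb" "y' < ?lb" for Y y y'
    using index_thermal_op[OF nd W _ _ eq that] N Tf that unfolding w_def by simp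
  have proj: "(\<Sum>x<?la. X $$ (x,x) * proj_mat ?la x $$ (p div ?lc, p div ?lc)) = X $$ (p div ?lc, p div ?lc)"
    if "p < ?N" for p
    using less_mult_imp_div_less[OF that] by (subst sum_eq_single[of _ "p div ?lc"]) (auto simp: proj_mat_def)
  have "(\<Sum>x<?la. X $$ (x,x) * T (proj_mat ?la x) $$ (y,y)) = (\<Sum>l<?ld. \<Sum>p<?N. X $$ (p div ?lc, p div ?lc) * w y l p)"
    if "y < ?lb" for y
  proof -
    have "(\<Sum>x<?la. X $$ (x,x) * T (proj_mat ?la x) $$ (y,y))
        = (\<Sum>l<?ld. \<Sum>p<?N. (\<Sum>x<?la. X $$ (x,x) * proj_mat ?la x $$ (p div ?lc, p div ?lc)) * w y l p)"
      using F[OF proj_mat_carrier that that]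
      by (simp add: sum_distrib_left sum_distrib_right mult.assoc sum.swap[of _ "{..<?la}"])
    then show ?thesis using proj by simp
  qed
  then show ?thesis unfolding diag_action_def using F[OF X] by simp
qed

lemma CTO_diag_action:
  assumes nd: "rel_nondeg a b" and E: "E \<in> CTO \<beta> a b" and X: "X \<in> carrier_mat (length a) (length a)"
  shows "diag_action (length a) (length b) E X"
  unfolding diag_action_def
proof (intro allI impI)
  let ?la = "length a" and ?lb = "length b"
  obtain T where T: "\<forall>n. thermal_op \<beta> a b (T n)"
    and conv: "\<forall>X \<in> carrier_mat ?la ?la. \<forall>i < ?lb. \<forall>j < ?lb. (\<lambda>n. T n X $$ (i,j)) \<longlonglongrightarrow> E X $$ (i,j)"
    using E unfolding CTO_def by blast
  fix y y' assume y: "y < ?lb" and y': "y' < ?lb"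
  have "T n X $$ (y,y') = (if y = y' then (\<Sum>x<?la. X $$ (x,x) * T n (proj_mat ?la x) $$ (y,y)) else 0)" for n
    using thermal_op_diag_action[OF nd T[rule_format, of n] X] y y' unfolding diag_action_def by blast
  moreover have "(\<lambda>n. if y = y' then (\<Sum>x<?la. X $$ (x,x) * T n (proj_mat ?la x) $$ (y,y)) else 0)
      \<longlonglongrightarrow> (if y = y' then (\<Sum>x<?la. X $$ (x,x) * E (proj_mat ?la x) $$ (y,y)) else 0)"
    using conv y by (cases "y = y'") (auto intro!: tendsto_sum tendsto_mult)
  moreover have "(\<lambda>n. T n X $$ (y,y')) \<longlonglongrightarrow> E X $$ (y,y')" using conv X y y' by blast
  ultimately show "E X $$ (y,y') = (if y = y' then (\<Sum>x<?la. X $$ (x,x) * E (proj_mat ?la x) $$ (y,y)) else 0)"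
    using LIMSEQ_unique by fastforce
qed

lemma free_op_channel:
  "\<FF> \<in> {CTO \<beta> a b, GPC \<beta> a b} \<Longrightarrow> E \<in> \<FF> \<Longrightarrow> channel (length a) (length b) E"
  unfolding CTO_def GPC_def by auto

lemma free_op_diag_action:
  assumes "rel_nondeg a b" "\<FF> \<in> {CTO \<beta> a b, GPC \<beta> a b}" "E \<in> \<FF>" "is_state (length a) X"
  shows "diag_action (length a) (length b) E X"
  using assms CTO_diag_action[OF assms(1)] covariant_channel_diag_action[OF assms(1)]
  unfolding is_state_def psd_def GPC_def by auto

definition classical_channel :: "nat \<Rightarrow> nat \<Rightarrow> (nat \<Rightarrow> nat \<Rightarrow> real) \<Rightarrow> complex mat \<Rightarrow> complex mat" where
  "classical_channel n m P X =
     mat m m (\<lambda>(i,j). if i = j then (\<Sum>x<n. complex_of_real (P i x) * X $$ (x,x)) else 0)"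

lemma classical_channel_carrier [simp]: "classical_channel n m P X \<in> carrier_mat m m"
  by (simp add: classical_channel_def)

text \<open>The Kraus operator with index \<open>k = y * n + x\<close> is \<open>sqrt (P y x) |y\<rangle>\<langle>x|\<close>.\<close>

definition classical_kraus :: "nat \<Rightarrow> nat \<Rightarrow> (nat \<Rightarrow> nat \<Rightarrow> real) \<Rightarrow> nat \<Rightarrow> complex mat" where
  "classical_kraus n m P k = mat m n (\<lambda>(i,j).
     if i = k div n \<and> j = k mod n then complex_of_real (sqrt (P (k div n) (k mod n))) else 0)"

lemma classical_kraus_carrier [simp]: "classical_kraus n m P k \<in> carrier_mat m n"
  by (simp add: classical_kraus_def)

lemma dim_classical_kraus [simp]:
  "dim_row (classical_kraus n m P k) = m" "dim_col (classical_kraus n m P k) = n"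
  by (simp_all add: classical_kraus_def)

lemma of_real_sqrt_mult_self: "0 \<le> p \<Longrightarrow> complex_of_real (sqrt p) * complex_of_real (sqrt p) = complex_of_real p"
  by (simp flip: of_real_mult)

lemma index_classical_kraus:
  "i < m \<Longrightarrow> j < n \<Longrightarrow> classical_kraus n m P k $$ (i,j) =
     (if i = k div n \<and> j = k mod n then complex_of_real (sqrt (P (k div n) (k mod n))) else 0)"
  by (simp add: classical_kraus_def)

lemma classical_kraus_complete:
  assumes P0: "\<forall>i<m. \<forall>j<n. 0 \<le> P i j" and P1: "\<forall>j<n. (\<Sum>i<m. P i j) = 1"
  shows "msum n n (m*n) (\<lambda>k. adj (classical_kraus n m P k) * classical_kraus n m P k) = 1\<^sub>m n"
proof (rule eq_matI)
  let ?K = "classical_kraus n m P"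
  fix i j assume "i < dim_row (1\<^sub>m n :: complex mat)" "j < dim_col (1\<^sub>m n :: complex mat)"
  then have i: "i < n" and j: "j < n" by auto
  have "(adj (?K k) * ?K k) $$ (i,j) = (if i = k mod n \<and> j = k mod n then complex_of_real (P (k div n) (k mod n)) else 0)"
    if "k < m * n" for k
  proof -
    have k: "k div n < m" "k mod n < n" using that less_mult_imp_div_less mod_less_of_less_mult by auto
    have "(adj (?K k) * ?K k) $$ (i,j) = (\<Sum>u<m. cnj (?K k $$ (u,i)) * ?K k $$ (u,j))"
      using i j by (subst index_mult_mat_sum[of _ n m _ n]) auto
    also have "\<dots> = cnj (?K k $$ (k div n,i)) * ?K k $$ (k div n,j)"
      using i j by (intro sum_eq_single) (auto simp: index_classical_kraus k(1))
    finally show ?thesis using i j k P0 by (auto simp: index_classical_kraus of_real_sqrt_mult_self)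
  qed
  then have "msum n n (m*n) (\<lambda>k. adj (?K k) * ?K k) $$ (i,j)
      = (\<Sum>k<m*n. if i = k mod n \<and> j = k mod n then complex_of_real (P (k div n) (k mod n)) else 0)"
    using i j by (simp add: index_msum)
  also have "\<dots> = (\<Sum>y<m. \<Sum>x<n. if i = x \<and> j = x then complex_of_real (P y x) else 0)"
    by (rule sum_lessThan_mult_div_mod)
  also have "\<dots> = (if i = j then complex_of_real (\<Sum>y<m. P y i) else 0)"
    using i by (simp add: sum_eq_single[of _ i] if_distrib cong: if_cong)
  also have "\<dots> = 1\<^sub>m n $$ (i,j)" using P1 i j by simp
  finally show "msum n n (m*n) (\<lambda>k. adj (?K k) * ?K k) $$ (i,j) = 1\<^sub>m n $$ (i,j)" .
qed (auto simp: msum_def)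

lemma classical_kraus_action:
  assumes P0: "\<forall>i<m. \<forall>j<n. 0 \<le> P i j" and X: "X \<in> carrier_mat n n"
  shows "classical_channel n m P X = msum m m (m*n) (\<lambda>k. classical_kraus n m P k * X * adj (classical_kraus n m P k))"
proof (rule eq_matI)
  let ?K = "classical_kraus n m P"
  fix i j assume "i < dim_row (msum m m (m*n) (\<lambda>k. ?K k * X * adj (?K k)))"
    "j < dim_col (msum m m (m*n) (\<lambda>k. ?K k * X * adj (?K k)))"
  then have i: "i < m" and j: "j < m" by (auto simp: msum_def)
  have "(\<Sum>u<n. \<Sum>v<n. ?K k $$ (i,u) * X $$ (u,v) * cnj (?K k $$ (j,v)))
      = (if i = k div n \<and> j = k div n then complex_of_real (P (k div n) (k mod n)) * X $$ (k mod n, k mod n) else 0)"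
    if "k < m * n" for k
  proof -
    have k: "k div n < m" "k mod n < n" using that less_mult_imp_div_less mod_less_of_less_mult by auto
    have "(\<Sum>u<n. \<Sum>v<n. ?K k $$ (i,u) * X $$ (u,v) * cnj (?K k $$ (j,v)))
        = ?K k $$ (i,k mod n) * X $$ (k mod n,k mod n) * cnj (?K k $$ (j,k mod n))"
      using i j k by (subst sum_eq_single[of _ "k mod n"], simp_all add: index_classical_kraus,
          subst sum_eq_single[of _ "k mod n"]) (auto simp: index_classical_kraus)
    then show ?thesis
      using i j k P0 by (auto simp: index_classical_kraus of_real_sqrt_mult_self mult.commute mult.left_commute)
  qed
  then have "msum m m (m*n) (\<lambda>k. ?K k * X * adj (?K k)) $$ (i,j) = (\<Sum>k<m*n.
      if i = k div n \<and> j = k div n then complex_of_real (P (k div n) (k mod n)) * X $$ (k mod n, k mod n) else 0)"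
    by (simp add: index_kraus_sum[OF _ X i j])
  also have "\<dots> = (\<Sum>y<m. \<Sum>x<n. if i = y \<and> j = y then complex_of_real (P y x) * X $$ (x,x) else 0)"
    by (rule sum_lessThan_mult_div_mod)
  also have "\<dots> = classical_channel n m P X $$ (i,j)"
    using i j by (simp add: classical_channel_def sum_eq_single[of _ i] if_distrib cong: if_cong)
  finally show "classical_channel n m P X $$ (i,j) = msum m m (m*n) (\<lambda>k. ?K k * X * adj (?K k)) $$ (i,j)" ..
qed (auto simp: msum_def classical_channel_def)

lemma classical_channel_channel:
  assumes "\<forall>i<m. \<forall>j<n. 0 \<le> P i j" "\<forall>j<n. (\<Sum>i<m. P i j) = 1"
  shows "channel n m (classical_channel n m P)"
  unfolding channel_def using classical_kraus_complete[OF assms] classical_kraus_action[OF assms(1)]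
  by (intro exI[of _ "m*n"] exI[of _ "classical_kraus n m P"]) auto

lemma classical_channel_time_cov: "time_cov a b (classical_channel (length a) (length b) P)"
  unfolding time_cov_def
proof (intro allI impI)
  let ?n = "length a" and ?m = "length b" and ?E = "classical_channel (length a) (length b) P"
  fix t :: real and \<rho> assume "is_state ?n \<rho>"
  then have X: "\<rho> \<in> carrier_mat ?n ?n" unfolding is_state_def psd_def by auto
  show "?E (evol a t * \<rho> * adj (evol a t)) = evol b t * ?E \<rho> * adj (evol b t)"
  proof (rule eq_matI)
    fix i j assume "i < dim_row (evol b t * ?E \<rho> * adj (evol b t))" "j < dim_col (evol b t * ?E \<rho> * adj (evol b t))"
    then have i: "i < ?m" and j: "j < ?m" by (auto simp: evol_def)
    show "?E (evol a t * \<rho> * adj (evol a t)) $$ (i,j) = (evol b t * ?E \<rho> * adj (evol b t)) $$ (i,j)"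
      using i j index_evol_conj[OF X] index_evol_conj[OF classical_channel_carrier i j]
      by (simp add: classical_channel_def)
  qed (auto simp: classical_channel_def evol_def)
qed

lemma classical_channel_eq:
  assumes X: "adj X = X" "X \<in> carrier_mat n n" and Y: "adj Y = Y" "Y \<in> carrier_mat m m" "diagonal_mat Y"
    and P: "\<forall>i<m. (\<Sum>x<n. P i x * diag_vec X x) = diag_vec Y i"
  shows "classical_channel n m P X = Y"
proof (rule eq_matI)
  fix i j assume "i < dim_row Y" "j < dim_col Y"
  then have i: "i < m" and j: "j < m" using Y by auto
  show "classical_channel n m P X $$ (i,j) = Y $$ (i,j)"
  proof (cases "i = j")
    case True
    have "classical_channel n m P X $$ (i,j) = (\<Sum>x<n. complex_of_real (P i x * diag_vec X x))"
      using i j True hermitian_diag_real[OF X] by (simp add: classical_channel_def)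
    also have "\<dots> = Y $$ (i,j)"
      using P i True hermitian_diag_real[OF Y(1,2) i] by (simp only: of_real_sum[symmetric])
    finally show ?thesis .
  next
    case False
    then show ?thesis using i j Y unfolding diagonal_mat_def by (simp add: classical_channel_def)
  qed
qed (use Y in \<open>auto simp: classical_channel_def\<close>)


definition perm_mat :: "nat \<Rightarrow> (nat \<Rightarrow> nat) \<Rightarrow> complex mat" where
  "perm_mat N \<pi> = mat N N (\<lambda>(i,p). if i = \<pi> p then 1 else 0)"

lemma perm_mat_carrier [simp]: "perm_mat N \<pi> \<in> carrier_mat N N"
  by (simp add: perm_mat_def)

lemma dim_perm_mat [simp]: "dim_row (perm_mat N \<pi>) = N" "dim_col (perm_mat N \<pi>) = N"
  by (simp_all add: perm_mat_def)

lemma index_perm_mat: "i < N \<Longrightarrow> p < N \<Longrightarrow> perm_mat N \<pi> $$ (i,p) = (if i = \<pi> p then 1 else 0)"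
  by (simp add: perm_mat_def)

lemma perm_mat_unitary:
  assumes bij: "bij_betw \<pi> {..<N} {..<N}"
  shows "unitary N (perm_mat N \<pi>)"
proof -
  let ?W = "perm_mat N \<pi>"
  have inj: "p < N \<Longrightarrow> q < N \<Longrightarrow> \<pi> p = \<pi> q \<longleftrightarrow> p = q" for p q
    using bij by (auto simp: bij_betw_def inj_on_def)
  have "adj ?W * ?W = 1\<^sub>m N"
  proof (rule eq_matI)
    fix p q assume "p < dim_row (1\<^sub>m N :: complex mat)" "q < dim_col (1\<^sub>m N :: complex mat)"
    then have p: "p < N" and q: "q < N" by auto
    have "\<pi> p < N" using bij p by (auto simp: bij_betw_def)
    then have "(adj ?W * ?W) $$ (p,q) = (if \<pi> p = \<pi> q then 1 else 0)"
      using p q by (subst index_mult_mat_sum[of _ N N _ N]) (auto simp: index_perm_mat sum_eq_single[of _ "\<pi> p"])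
    then show "(adj ?W * ?W) $$ (p,q) = 1\<^sub>m N $$ (p,q)" using inj p q by simp
  qed auto
  moreover have "?W * adj ?W = 1\<^sub>m N"
  proof (rule eq_matI)
    fix i j assume "i < dim_row (1\<^sub>m N :: complex mat)" "j < dim_col (1\<^sub>m N :: complex mat)"
    then have i: "i < N" and j: "j < N" by auto
    have "i \<in> \<pi> ` {..<N}" using bij i by (simp add: bij_betw_def)
    then obtain p where p: "p < N" "\<pi> p = i" by auto
    have "(?W * adj ?W) $$ (i,j) = (if i = j then 1 else 0)"
      using i j p inj by (subst index_mult_mat_sum[of _ N N _ N]) (auto simp: index_perm_mat sum_eq_single[of _ p])
    then show "(?W * adj ?W) $$ (i,j) = 1\<^sub>m N $$ (i,j)" using i j by simp
  qed auto
  ultimately show ?thesis unfolding unitary_def by simp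
qed

lemma perm_mat_energy_preserving:
  assumes N: "N = length a * length c" "N = length b * length d"
    and into: "\<forall>p<N. \<pi> p < N"
    and en: "\<forall>p<N. b ! (\<pi> p div length d) + d ! (\<pi> p mod length d) = a ! (p div length c) + c ! (p mod length c)"
  shows "perm_mat N \<pi> * ham_comp a c = ham_comp b d * perm_mat N \<pi>"
proof (rule eq_matI)
  fix i p assume "i < dim_row (ham_comp b d * perm_mat N \<pi>)" "p < dim_col (ham_comp b d * perm_mat N \<pi>)"
  then have i: "i < N" and p: "p < N" using N by (auto simp: ham_comp_diag)
  have "(perm_mat N \<pi> * ham_comp a c) $$ (i,p)
      = perm_mat N \<pi> $$ (i,p) * complex_of_real (a ! (p div length c) + c ! (p mod length c))"
    unfolding ham_comp_diag using N i p by (intro index_mult_diag) auto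
  moreover have "(ham_comp b d * perm_mat N \<pi>) $$ (i,p)
      = complex_of_real (b ! (i div length d) + d ! (i mod length d)) * perm_mat N \<pi> $$ (i,p)"
    unfolding ham_comp_diag using N i p by (intro index_diag_mult) auto
  ultimately show "(perm_mat N \<pi> * ham_comp a c) $$ (i,p) = (ham_comp b d * perm_mat N \<pi>) $$ (i,p)"
    using en i p by (simp add: index_perm_mat del: of_real_add)
qed (use N in \<open>auto simp: ham_comp_diag\<close>)

definition perm_op :: "real \<Rightarrow> nat \<Rightarrow> real list \<Rightarrow> real list \<Rightarrow> (nat \<Rightarrow> nat) \<Rightarrow> complex mat \<Rightarrow> complex mat" where
  "perm_op \<beta> m c d \<pi> X =
     ptrace2 m (length d) (perm_mat (dim_row X * length c) \<pi> * kron X (gibbs \<beta> c) * adj (perm_mat (dim_row X * length c) \<pi>))"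

lemma perm_op_thermal_op:
  assumes c: "valid_ham c" and d: "valid_ham d"
    and N: "length a * length c = length b * length d"
    and bij: "bij_betw \<pi> {..<length a * length c} {..<length a * length c}"
    and en: "\<forall>p < length a * length c. b ! (\<pi> p div length d) + d ! (\<pi> p mod length d) = a ! (p div length c) + c ! (p mod length c)"
  shows "thermal_op \<beta> a b (perm_op \<beta> (length b) c d \<pi>)"
  unfolding thermal_op_def
  using c d N perm_mat_unitary[OF bij] perm_mat_energy_preserving[OF refl N _ en] bij
  by (intro exI[of _ c] exI[of _ d] exI[of _ "perm_mat (length a * length c) \<pi>"])
    (auto simp: perm_op_def bij_betw_def)

lemma sum_block_indicator:
  assumes "i < m * (D::nat)"
  shows "(\<Sum>l<D. if y * D + l = i then f else 0) = (if i div D = y then f else 0)"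
proof -
  have "y * D + l = i \<longleftrightarrow> i div D = y \<and> l = i mod D" if "l < D" for l
    using that div_mult_mod_eq[of i D] by auto
  then have "(\<Sum>l<D. if y * D + l = i then f else 0) = (\<Sum>l<D. if i div D = y \<and> l = i mod D then f else 0)"
    by (intro sum.cong) auto
  then show ?thesis using mod_less_of_less_mult[OF assms] by (cases "i div D = y") auto
qed

lemma index_perm_op_proj:
  assumes nd: "rel_nondeg a b" and N: "length a * length c = length b * length d"
    and bij: "bij_betw \<pi> {..<length a * length c} {..<length a * length c}"
    and en: "\<forall>p < length a * length c. b ! (\<pi> p div length d) + d ! (\<pi> p mod length d) = a ! (p div length c) + c ! (p mod length c)"
    and x: "x < length a" and y: "y < length b"
  shows "perm_op \<beta> (length b) c d \<pi> (proj_mat (length a) x) $$ (y,y) = complex_of_real (\<Sum>p < length a * length c.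
           if p div length c = x \<and> \<pi> p div length d = y then exp (- \<beta> * c ! (p mod length c)) / partition_fn \<beta> c else 0)"
proof -
  let ?lc = "length c" and ?ld = "length d" and ?N = "length a * length c"
  let ?g = "\<lambda>p. exp (- \<beta> * c ! (p mod ?lc)) / partition_fn \<beta> c"
  have into: "\<pi> p < length b * ?ld" if "p < ?N" for p using bij that N by (auto simp: bij_betw_def)
  have gibbs: "gibbs \<beta> c $$ (p mod ?lc, p mod ?lc) = complex_of_real (?g p)" if "p < ?N" for p
    using mod_less_of_less_mult[OF that] by (simp add: index_gibbs)
  have ep: "perm_mat ?N \<pi> * ham_comp a c = ham_comp b d * perm_mat ?N \<pi>"
    using perm_mat_energy_preserving[OF refl N _ en] bij by (auto simp: bij_betw_def)
  have "perm_op \<beta> (length b) c d \<pi> (proj_mat (length a) x) $$ (y,y) = (\<Sum>l<?ld. \<Sum>p<?N.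
        proj_mat (length a) x $$ (p div ?lc, p div ?lc) *
        (complex_of_real ((cmod (perm_mat ?N \<pi> $$ (y * ?ld + l, p)))\<^sup>2) * gibbs \<beta> c $$ (p mod ?lc, p mod ?lc)))"
    using index_thermal_op[OF nd perm_mat_carrier refl N ep proj_mat_carrier y y]
    by (simp add: perm_op_def proj_mat_def)
  also have "\<dots> = (\<Sum>p<?N. \<Sum>l<?ld. if y * ?ld + l = \<pi> p then complex_of_real (if p div ?lc = x then ?g p else 0) else 0)"
    using mult_add_less_mult[OF y] N less_mult_imp_div_less gibbs
    by (subst sum.swap, intro sum.cong refl) (auto simp: index_perm_mat proj_mat_def)
  also have "\<dots> = complex_of_real (\<Sum>p<?N. if p div ?lc = x \<and> \<pi> p div ?ld = y then ?g p else 0)"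
    unfolding of_real_sum
  proof (intro sum.cong refl)
    fix p assume "p \<in> {..<?N}"
    then have blk: "(\<Sum>l<?ld. if y * ?ld + l = \<pi> p then F else 0) = (if \<pi> p div ?ld = y then F else 0)" for F
      using into by (intro sum_block_indicator) simp
    show "(\<Sum>l<?ld. if y * ?ld + l = \<pi> p then complex_of_real (if p div ?lc = x then ?g p else 0) else 0)
        = complex_of_real (if p div ?lc = x \<and> \<pi> p div ?ld = y then ?g p else 0)"
      unfolding blk by simp
  qed
  finally show ?thesis .
qed

lemma bij_betw_fun_upd_insert:
  assumes "bij_betw f A B" "a \<notin> A" "b \<notin> B"
  shows "bij_betw (f(a := b)) (insert a A) (insert b B)"
proof -
  have "bij_betw (f(a := b)) A B"
    using assms(1,2) by (subst bij_betw_cong[where g=f]) auto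
  then show ?thesis using assms(2,3) by (auto simp: bij_betw_def)
qed

lemma card_filter_Diff_singleton:
  assumes "finite A" "a \<in> A"
  shows "card {x\<in>A - {a}. P x} = (if P a then card {x\<in>A. P x} - 1 else card {x\<in>A. P x})"
proof -
  have "{x\<in>A - {a}. P x} = {x\<in>A. P x} - {a}" by auto
  then show ?thesis using assms by (auto simp: card_Diff_singleton_if)
qed

lemma sum_fun_upd_decrement:
  fixes f :: "'a \<Rightarrow> nat"
  assumes "finite A" "a \<in> A" "0 < f a"
  shows "(\<Sum>x\<in>A. (f(a := f a - 1)) x) = (\<Sum>x\<in>A. f x) - 1"
  using assms by (simp add: sum.remove)

lemma class_preserving_bij:
  fixes \<kappa>1 :: "'a \<Rightarrow> 'k" and \<kappa>2 :: "'b \<Rightarrow> 'k"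
  assumes "finite S1" "finite S2" "\<And>q. card {s\<in>S1. \<kappa>1 s = q} = card {t\<in>S2. \<kappa>2 t = q}"
  shows "\<exists>\<sigma>. bij_betw \<sigma> S1 S2 \<and> (\<forall>s\<in>S1. \<kappa>2 (\<sigma> s) = \<kappa>1 s)"
proof -
  have "\<forall>q. \<exists>f. bij_betw f {s\<in>S1. \<kappa>1 s = q} {t\<in>S2. \<kappa>2 t = q}"
    using assms by (auto intro: finite_same_card_bij)
  then obtain f where f: "\<And>q. bij_betw (f q) {s\<in>S1. \<kappa>1 s = q} {t\<in>S2. \<kappa>2 t = q}"
    by metis
  define \<sigma> where "\<sigma> s = f (\<kappa>1 s) s" for s
  have in_class: "\<sigma> s \<in> S2 \<and> \<kappa>2 (\<sigma> s) = \<kappa>1 s" if "s \<in> S1" for s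
    using f[of "\<kappa>1 s"] that unfolding \<sigma>_def bij_betw_def by auto
  have "inj_on \<sigma> S1"
  proof (rule inj_onI)
    fix s s' assume s: "s \<in> S1" "s' \<in> S1" "\<sigma> s = \<sigma> s'"
    then have "\<kappa>1 s = \<kappa>1 s'" using in_class by metis
    then show "s = s'" using f[of "\<kappa>1 s"] s unfolding \<sigma>_def bij_betw_def inj_on_def by auto
  qed
  moreover have "S2 \<subseteq> \<sigma> ` S1"
  proof
    fix t assume "t \<in> S2"
    then have "t \<in> f (\<kappa>2 t) ` {s\<in>S1. \<kappa>1 s = \<kappa>2 t}" using f[of "\<kappa>2 t"] by (auto simp: bij_betw_def)
    then obtain s where "s \<in> S1" "\<kappa>1 s = \<kappa>2 t" "t = f (\<kappa>2 t) s" by auto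
    then show "t \<in> \<sigma> ` S1" unfolding \<sigma>_def by (intro image_eqI[of _ _ s]) auto
  qed
  ultimately show ?thesis using in_class by (intro exI[of _ \<sigma>]) (auto simp: bij_betw_def)
qed

text \<open>Matching one element at a time reduces the total demand.\<close>

lemma routing_bij:
  fixes \<kappa>1 :: "'a \<Rightarrow> 'k" and \<kappa>2 :: "'b \<Rightarrow> 'k" and xl :: "'a \<Rightarrow> 'x" and yl :: "'b \<Rightarrow> 'y"
    and F :: "'k \<Rightarrow> 'y \<Rightarrow> 'x \<Rightarrow> nat"
  assumes "finite S1" "finite S2" "finite Xs" "finite Ys" "xl ` S1 \<subseteq> Xs" "yl ` S2 \<subseteq> Ys"
    and "\<And>q. card {s\<in>S1. \<kappa>1 s = q} = card {t\<in>S2. \<kappa>2 t = q}"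
    and "\<And>q x. x \<in> Xs \<Longrightarrow> (\<Sum>y\<in>Ys. F q y x) \<le> card {s\<in>S1. \<kappa>1 s = q \<and> xl s = x}"
    and "\<And>q y. y \<in> Ys \<Longrightarrow> (\<Sum>x\<in>Xs. F q y x) \<le> card {t\<in>S2. \<kappa>2 t = q \<and> yl t = y}"
  shows "\<exists>\<sigma>. bij_betw \<sigma> S1 S2 \<and> (\<forall>s\<in>S1. \<kappa>2 (\<sigma> s) = \<kappa>1 s) \<and>
     (\<forall>q. \<forall>x\<in>Xs. \<forall>y\<in>Ys. F q y x \<le> card {s\<in>S1. \<kappa>1 s = q \<and> xl s = x \<and> yl (\<sigma> s) = y})"
proof -
  define Q where "Q = \<kappa>1 ` S1"
  have "finite Q" using assms(1) by (simp add: Q_def)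
  moreover have "F q y x = 0" if "q \<notin> Q" "x \<in> Xs" "y \<in> Ys" for q y x
  proof -
    have "F q y x \<le> (\<Sum>y\<in>Ys. F q y x)" using assms(4) that by (intro member_le_sum) auto
    also have "\<dots> \<le> card {s\<in>S1. \<kappa>1 s = q \<and> xl s = x}" using assms(8) that by blast
    also have "{s\<in>S1. \<kappa>1 s = q \<and> xl s = x} = {}" using that by (auto simp: Q_def)
    finally show ?thesis by simp
  qed
  ultimately show ?thesis using assms
  proof (induction "\<Sum>q\<in>Q. \<Sum>y\<in>Ys. \<Sum>x\<in>Xs. F q y x" arbitrary: S1 S2 F rule: less_induct)
    case less
    let ?I = "\<lambda>S1 q x. card {s\<in>S1. \<kappa>1 s = q \<and> xl s = x}"
    let ?O = "\<lambda>S2 q y. card {t\<in>S2. \<kappa>2 t = q \<and> yl t = y}"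
    show ?case
    proof (cases "\<exists>q y x. y \<in> Ys \<and> x \<in> Xs \<and> F q y x > 0")
      case False
      then show ?thesis using class_preserving_bij[of S1 S2 \<kappa>1 \<kappa>2] less.prems by fastforce
    next
      case True
      then obtain q0 y0 x0 where q0: "y0 \<in> Ys" "x0 \<in> Xs" "F q0 y0 x0 > 0" by blast
      then have "q0 \<in> Q" using less.prems(2) by (metis less_irrefl)
      have "0 < ?I S1 q0 x0"
        using q0 less.prems(6) member_le_sum[of y0 Ys "\<lambda>y. F q0 y x0"] less.prems(10)[OF q0(2), of q0] by linarith
      then obtain s0 where s0: "s0 \<in> S1" "\<kappa>1 s0 = q0" "xl s0 = x0" by (metis (mono_tags, lifting) card_gt_0_iff mem_Collect_eq ex_in_conv)
      have "0 < ?O S2 q0 y0"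
        using q0 less.prems(5) member_le_sum[of x0 Xs "\<lambda>x. F q0 y0 x"] less.prems(11)[OF q0(1), of q0] by linarith
      then obtain t0 where t0: "t0 \<in> S2" "\<kappa>2 t0 = q0" "yl t0 = y0" by (metis (mono_tags, lifting) card_gt_0_iff mem_Collect_eq ex_in_conv)
      define F' where "F' = F(q0 := (F q0)(y0 := (F q0 y0)(x0 := F q0 y0 x0 - 1)))"
      have F': "F' q y x = (if (q, y, x) = (q0, y0, x0) then F q y x - 1 else F q y x)" for q y x
        by (simp add: F'_def)
      note card1 = card_filter_Diff_singleton[OF less.prems(3) s0(1)]
      note card2 = card_filter_Diff_singleton[OF less.prems(4) t0(1)]
      have dec: "(\<Sum>q\<in>Q. \<Sum>y\<in>Ys. \<Sum>x\<in>Xs. F' q y x) < (\<Sum>q\<in>Q. \<Sum>y\<in>Ys. \<Sum>x\<in>Xs. F q y x)"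
      proof (rule sum_strict_mono_ex1)
        show "\<forall>q\<in>Q. (\<Sum>y\<in>Ys. \<Sum>x\<in>Xs. F' q y x) \<le> (\<Sum>y\<in>Ys. \<Sum>x\<in>Xs. F q y x)"
          by (intro ballI sum_mono) (simp add: F')
        show "\<exists>q\<in>Q. (\<Sum>y\<in>Ys. \<Sum>x\<in>Xs. F' q y x) < (\<Sum>y\<in>Ys. \<Sum>x\<in>Xs. F q y x)"
          using q0 \<open>q0 \<in> Q\<close> less.prems(5,6)
          by (intro bexI[of _ q0] sum_strict_mono_ex1 ballI sum_mono bexI[of _ y0] bexI[of _ x0]) (auto simp: F')
      qed (use less.prems(1) in auto)
      obtain \<sigma>' where bij': "bij_betw \<sigma>' (S1 - {s0}) (S2 - {t0})"
        and cls': "\<forall>s\<in>S1 - {s0}. \<kappa>2 (\<sigma>' s) = \<kappa>1 s"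
        and cnt': "\<forall>q. \<forall>x\<in>Xs. \<forall>y\<in>Ys. F' q y x \<le> card {s\<in>S1 - {s0}. \<kappa>1 s = q \<and> xl s = x \<and> yl (\<sigma>' s) = y}"
      proof (rule less.hyps[OF dec less.prems(1), of "S1 - {s0}" "S2 - {t0}", elim_format])
        show "\<And>q y x. q \<notin> Q \<Longrightarrow> x \<in> Xs \<Longrightarrow> y \<in> Ys \<Longrightarrow> F' q y x = 0"
          using less.prems(2) by (auto simp: F')
        show "finite (S1 - {s0})" "finite (S2 - {t0})" "xl ` (S1 - {s0}) \<subseteq> Xs" "yl ` (S2 - {t0}) \<subseteq> Ys"
          using less.prems(3,4,7,8) by auto
        show "card {s\<in>S1 - {s0}. \<kappa>1 s = q} = card {t\<in>S2 - {t0}. \<kappa>2 t = q}" for q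
          unfolding card1 card2 using less.prems(9)[of q] s0 t0 by simp
        show "(\<Sum>y\<in>Ys. F' q y x) \<le> card {s\<in>S1 - {s0}. \<kappa>1 s = q \<and> xl s = x}" if "x \<in> Xs" for q x
        proof -
          have "(\<Sum>y\<in>Ys. F' q y x) = (\<Sum>y\<in>Ys. F q y x) - (if (q, x) = (q0, x0) then 1 else 0)"
          proof (cases "(q, x) = (q0, x0)")
            case True
            have "(\<Sum>y\<in>Ys. F' q y x) = (\<Sum>y\<in>Ys. ((\<lambda>y. F q y x)(y0 := F q y0 x - 1)) y)"
              using True by (intro sum.cong refl) (auto simp: F')
            also have "\<dots> = (\<Sum>y\<in>Ys. F q y x) - 1"
              using True q0 by (intro sum_fun_upd_decrement less.prems(6)) auto
            finally show ?thesis using True by simp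
          qed (auto simp: F')
          then show ?thesis unfolding card1 using less.prems(10)[OF that, of q] s0 by auto
        qed
        show "(\<Sum>x\<in>Xs. F' q y x) \<le> card {t\<in>S2 - {t0}. \<kappa>2 t = q \<and> yl t = y}" if "y \<in> Ys" for q y
        proof -
          have "(\<Sum>x\<in>Xs. F' q y x) = (\<Sum>x\<in>Xs. F q y x) - (if (q, y) = (q0, y0) then 1 else 0)"
          proof (cases "(q, y) = (q0, y0)")
            case True
            have "(\<Sum>x\<in>Xs. F' q y x) = (\<Sum>x\<in>Xs. ((F q y)(x0 := F q y x0 - 1)) x)"
              using True by (intro sum.cong refl) (auto simp: F')
            also have "\<dots> = (\<Sum>x\<in>Xs. F q y x) - 1"
              using True q0 by (intro sum_fun_upd_decrement less.prems(5)) auto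
            finally show ?thesis using True by simp
          qed (auto simp: F')
          then show ?thesis unfolding card2 using less.prems(11)[OF that, of q] t0 by auto
        qed
      qed (use less.prems(5,6) in auto)
      define \<sigma> where "\<sigma> = \<sigma>'(s0 := t0)"
      have "bij_betw \<sigma> S1 S2"
        using bij_betw_fun_upd_insert[OF bij', of s0 t0] s0(1) t0(1) by (simp add: \<sigma>_def insert_absorb)
      moreover have "\<forall>s\<in>S1. \<kappa>2 (\<sigma> s) = \<kappa>1 s" using cls' s0 t0 by (simp add: \<sigma>_def)
      moreover have "F q y x \<le> card {s\<in>S1. \<kappa>1 s = q \<and> xl s = x \<and> yl (\<sigma> s) = y}"
        if "x \<in> Xs" "y \<in> Ys" for q x y
      proof -
        let ?P = "\<lambda>s. \<kappa>1 s = q \<and> xl s = x \<and> yl (\<sigma> s) = y"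
        have eq: "{s\<in>S1 - {s0}. \<kappa>1 s = q \<and> xl s = x \<and> yl (\<sigma>' s) = y} = {s\<in>S1 - {s0}. ?P s}"
          by (auto simp: \<sigma>_def)
        have "F' q y x \<le> card {s\<in>S1 - {s0}. \<kappa>1 s = q \<and> xl s = x \<and> yl (\<sigma>' s) = y}"
          using cnt' that by blast
        then have "F' q y x \<le> card {s\<in>S1 - {s0}. ?P s}" unfolding eq .
        then have "F' q y x \<le> (if ?P s0 then card {s\<in>S1. ?P s} - 1 else card {s\<in>S1. ?P s})"
          unfolding card1 .
        moreover have "?P s0 \<longleftrightarrow> (q, y, x) = (q0, y0, x0)" using s0 t0 by (auto simp: \<sigma>_def)
        moreover have "?P s0 \<Longrightarrow> 0 < card {s\<in>S1. ?P s}" using less.prems(3) s0(1) by (auto simp: card_gt_0_iff)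
        ultimately show ?thesis using q0(3) by (auto simp: F' split: if_splits)
      qed
      ultimately show ?thesis by blast
    qed
  qed
qed

lemma card_filter_bij_betw:
  assumes "bij_betw f A B"
  shows "card {x\<in>A. Q (f x)} = card {z\<in>B. Q z}"
proof -
  have "bij_betw f {x\<in>A. Q (f x)} {z\<in>B. Q z}"
    using assms unfolding bij_betw_def inj_on_def by auto
  then show ?thesis by (rule bij_betw_same_card)
qed

locale bath_construction =
  fixes a b :: "real list" and \<beta> :: real and P :: "nat \<Rightarrow> nat \<Rightarrow> real"
    and M L NR :: nat and lab :: "nat \<Rightarrow> nat \<Rightarrow> nat"
  assumes va: "valid_ham a" and vb: "valid_ham b" and beta: "\<beta> > 0"
    and P0: "\<forall>i<length b. \<forall>j<length a. 0 \<le> P i j"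
    and P1: "\<forall>j<length a. (\<Sum>i<length b. P i j) = 1"
    and Pg: "\<forall>i<length b. (\<Sum>j<length a. P i j * diag_vec (gibbs \<beta> a) j) = diag_vec (gibbs \<beta> b) i"
    and M1: "M \<ge> 1" and L1: "L \<ge> 1"
    and lab_range: "\<forall>r<NR. lab r \<in> PiE {..<length a * length b} (\<lambda>_. {..L})"
    and lab_count: "\<forall>pt \<in> PiE {..<length a * length b} (\<lambda>_. {..L}).
        card {r. r < NR \<and> lab r = pt} = nat \<lceil>real M * exp (\<beta> * (\<Sum>s<length a * length b. real (pt s) * (a ! (s div length b) + b ! (s mod length b))))\<rceil>"
begin

abbreviation "n \<equiv> length a"
abbreviation "m \<equiv> length b"
abbreviation "nm \<equiv> n * m"
definition "pair_energy s = a ! (s div m) + b ! (s mod m)"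
definition "occ_energy pt = (\<Sum>s<nm. real (pt s) * pair_energy s)"
definition "degen pt = nat \<lceil>real M * exp (\<beta> * occ_energy pt)\<rceil>"
definition "occ_box = PiE {..<nm} (\<lambda>_. {..L})"
definition "occ_inner = PiE {..<nm} (\<lambda>_. {1..L})"
definition "occ_inc pt t = pt(t := Suc (pt t))"
definition "occ_dec q t = q(t := q t - 1)"
abbreviation "lc \<equiv> m * NR"
abbreviation "ld \<equiv> n * NR"
abbreviation "N \<equiv> n * lc"
definition "bath_in = map (\<lambda>k. b ! (k div NR) + occ_energy (lab (k mod NR))) [0..<lc]"
definition "bath_out = map (\<lambda>k. a ! (k div NR) + occ_energy (lab (k mod NR))) [0..<ld]"
definition "charge z = (case z of (x, y, r) \<Rightarrow> occ_inc (lab r) (x * m + y))"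
definition "split_in p = (p div lc, (p mod lc) div NR, (p mod lc) mod NR)"
definition "split_out i = ((i mod ld) div NR, i div ld, (i mod ld) mod NR)"
definition "cells = {..<n} \<times> {..<m} \<times> {..<NR}"

lemma n0: "n > 0" using va by (simp add: valid_ham_def)
lemma m0: "m > 0" using vb by (simp add: valid_ham_def)

lemma a_nonneg: "x < n \<Longrightarrow> a ! x \<ge> 0" using va by (auto simp: valid_ham_def)
lemma b_nonneg: "y < m \<Longrightarrow> b ! y \<ge> 0" using vb by (auto simp: valid_ham_def)

lemma pair_energy_nonneg: "s < nm \<Longrightarrow> pair_energy s \<ge> 0"
  using a_nonneg b_nonneg less_mult_imp_div_less[of s n m] mod_less_of_less_mult[of s n m] by (simp add: pair_energy_def)

lemma pair_energy_slot: "y < m \<Longrightarrow> pair_energy (x * m + y) = a ! x + b ! y"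
  using m0 by (simp add: pair_energy_def)

lemma rho_nonneg: "occ_energy pt \<ge> 0"
  unfolding occ_energy_def using pair_energy_nonneg by (intro sum_nonneg) auto

lemma rho_upd: "t < nm \<Longrightarrow> occ_energy (occ_inc pt t) = occ_energy pt + pair_energy t"
proof -
  assume t: "t < nm"
  have "occ_energy (occ_inc pt t) = (\<Sum>s<nm. real (pt s) * pair_energy s + (if s = t then pair_energy t else 0))"
    unfolding occ_energy_def occ_inc_def by (intro sum.cong refl) (auto simp: algebra_simps)
  also have "\<dots> = occ_energy pt + pair_energy t" using t by (simp add: sum.distrib occ_energy_def)
  finally show ?thesis .
qed

lemma NR0: "N > 0 \<Longrightarrow> NR > 0" by (cases NR) auto

lemma decin_bij: "bij_betw split_in {..<N} cells"
proof (rule bij_betw_byWitness[where f'="\<lambda>(x,y,r). x * lc + (y * NR + r)"])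
  show "\<forall>p\<in>{..<N}. (case split_in p of (x, y, r) \<Rightarrow> x * lc + (y * NR + r)) = p"
    by (simp only: split_in_def prod.case div_mult_mod_eq) simp
  show "\<forall>z\<in>cells. split_in (case z of (x, y, r) \<Rightarrow> x * lc + (y * NR + r)) = z"
  proof
    fix z assume "z \<in> cells"
    then obtain x y r where z: "z = (x,y,r)" "x < n" "y < m" "r < NR" by (auto simp: cells_def)
    have k: "y * NR + r < lc" using mult_add_less_mult[OF z(3) z(4)] by (simp add: mult.commute)
    show "split_in (case z of (x, y, r) \<Rightarrow> x * lc + (y * NR + r)) = z"
      using z div_mod_mult_add[OF k, of x] div_mod_mult_add[OF z(4), of y] by (simp add: split_in_def)
  qed
  show "split_in ` {..<N} \<subseteq> cells"
  proof
    fix z assume "z \<in> split_in ` {..<N}"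
    then obtain p where p: "p < N" "z = split_in p" by auto
    have 1: "p div lc < n" using p less_mult_imp_div_less by auto
    have 2: "p mod lc < m * NR" using p mod_less_of_less_mult by auto
    show "z \<in> cells" using p 1 less_mult_imp_div_less[OF 2] mod_less_of_less_mult[OF 2] by (simp add: split_in_def cells_def)
  qed
  show "(\<lambda>(x,y,r). x * lc + (y * NR + r)) ` cells \<subseteq> {..<N}"
  proof
    fix p assume "p \<in> (\<lambda>(x,y,r). x * lc + (y * NR + r)) ` cells"
    then obtain x y r where z: "p = x * lc + (y * NR + r)" "x < n" "y < m" "r < NR" by (auto simp: cells_def)
    have k: "y * NR + r < lc" using mult_add_less_mult[OF z(3) z(4)] by (simp add: mult.commute)
    show "p \<in> {..<N}" using mult_add_less_mult[OF z(2) k] z(1) by simp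
  qed
qed

lemma decout_bij: "bij_betw split_out {..<N} cells"
proof (rule bij_betw_byWitness[where f'="\<lambda>(x,y,r). y * ld + (x * NR + r)"])
  show "\<forall>p\<in>{..<N}. (case split_out p of (x, y, r) \<Rightarrow> y * ld + (x * NR + r)) = p"
    by (simp only: split_out_def prod.case div_mult_mod_eq) simp
  show "\<forall>z\<in>cells. split_out (case z of (x, y, r) \<Rightarrow> y * ld + (x * NR + r)) = z"
  proof
    fix z assume "z \<in> cells"
    then obtain x y r where z: "z = (x,y,r)" "x < n" "y < m" "r < NR" by (auto simp: cells_def)
    have k: "x * NR + r < ld" using mult_add_less_mult[OF z(2) z(4)] by (simp add: mult.commute)
    show "split_out (case z of (x, y, r) \<Rightarrow> y * ld + (x * NR + r)) = z"
      using z div_mod_mult_add[OF k, of y] div_mod_mult_add[OF z(4), of x] by (simp add: split_out_def)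
  qed
  have NN: "N = m * ld" by simp
  show "split_out ` {..<N} \<subseteq> cells"
  proof
    fix z assume "z \<in> split_out ` {..<N}"
    then obtain p where p: "p < m * ld" "z = split_out p" using NN by auto
    have 1: "p div ld < m" using p less_mult_imp_div_less by auto
    have 2: "p mod ld < n * NR" using p mod_less_of_less_mult by auto
    show "z \<in> cells" using p 1 less_mult_imp_div_less[OF 2] mod_less_of_less_mult[OF 2] by (simp add: split_out_def cells_def)
  qed
  show "(\<lambda>(x,y,r). y * ld + (x * NR + r)) ` cells \<subseteq> {..<N}"
  proof
    fix p assume "p \<in> (\<lambda>(x,y,r). y * ld + (x * NR + r)) ` cells"
    then obtain x y r where z: "p = y * ld + (x * NR + r)" "x < n" "y < m" "r < NR" by (auto simp: cells_def)
    have k: "x * NR + r < ld" using mult_add_less_mult[OF z(2) z(4)] by (simp add: mult.commute)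
    have "p < m * ld" using mult_add_less_mult[OF z(3) k] z(1) by simp
    then show "p \<in> {..<N}" by (simp only: lessThan_iff mult.left_commute[of m n NR])
  qed
qed

lemma c_len: "length bath_in = lc" by (simp add: bath_in_def)
lemma d_len: "length bath_out = ld" by (simp add: bath_out_def)
lemma c_nth: "k < lc \<Longrightarrow> bath_in ! k = b ! (k div NR) + occ_energy (lab (k mod NR))" by (simp add: bath_in_def)
lemma d_nth: "k < ld \<Longrightarrow> bath_out ! k = a ! (k div NR) + occ_energy (lab (k mod NR))" by (simp add: bath_out_def)

lemma energy_in:
  assumes "p < N"
  shows "a ! (p div length bath_in) + bath_in ! (p mod length bath_in) = occ_energy (charge (split_in p))"
proof -
  obtain x y r where z: "split_in p = (x,y,r)" "x < n" "y < m" "r < NR"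
  proof -
    have "split_in p \<in> cells" using decin_bij assms unfolding bij_betw_def by auto
    then show ?thesis using that by (cases "split_in p") (auto simp: cells_def)
  qed
  have k: "p mod lc < lc" using assms mod_less_of_less_mult by auto
  have x: "p div lc = x" and y: "(p mod lc) div NR = y" and r: "(p mod lc) mod NR = r" using z(1) by (auto simp: split_in_def)
  have t: "x * m + y < nm" using mult_add_less_mult[OF z(2) z(3)] .
  have "a ! (p div length bath_in) + bath_in ! (p mod length bath_in) = a ! x + (b ! y + occ_energy (lab r))"
    unfolding c_len using c_nth[OF k] x y r by simp
  also have "\<dots> = occ_energy (charge (split_in p))" unfolding z(1) charge_def using rho_upd[OF t] pair_energy_slot[OF z(3)] by simp
  finally show ?thesis .
qed

lemma energy_out:
  assumes "i < N"
  shows "b ! (i div length bath_out) + bath_out ! (i mod length bath_out) = occ_energy (charge (split_out i))"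
proof -
  obtain x y r where z: "split_out i = (x,y,r)" "x < n" "y < m" "r < NR"
  proof -
    have "split_out i \<in> cells" using decout_bij assms unfolding bij_betw_def by auto
    then show ?thesis using that by (cases "split_out i") (auto simp: cells_def)
  qed
  have i2: "i < m * ld" using assms by (simp add: mult.left_commute)
  have k: "i mod ld < ld" using i2 mod_less_of_less_mult by blast
  have x: "(i mod ld) div NR = x" and y: "i div ld = y" and r: "(i mod ld) mod NR = r" using z(1) by (auto simp: split_out_def)
  have t: "x * m + y < nm" using mult_add_less_mult[OF z(2) z(3)] .
  have "b ! (i div length bath_out) + bath_out ! (i mod length bath_out) = b ! y + (a ! x + occ_energy (lab r))"
    unfolding d_len using d_nth[OF k] x y r by simp
  also have "\<dots> = occ_energy (charge (split_out i))" unfolding z(1) charge_def using rho_upd[OF t] pair_energy_slot[OF z(3)] by simp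
  finally show ?thesis .
qed

end


context bath_construction begin

lemma intr_ge1: "q \<in> occ_inner \<Longrightarrow> t < nm \<Longrightarrow> q t \<ge> 1 \<and> q t \<le> L"
  unfolding occ_inner_def by (auto simp: PiE_iff)

lemma intr_bx: "q \<in> occ_inner \<Longrightarrow> q \<in> occ_box"
  unfolding occ_inner_def occ_box_def by (auto simp: PiE_iff)

lemma dn_bx: "q \<in> occ_inner \<Longrightarrow> t < nm \<Longrightarrow> occ_dec q t \<in> occ_box"
proof -
  assume q: "q \<in> occ_inner" and t: "t < nm"
  have "q t - 1 \<in> {..L}" using intr_ge1[OF q t] by auto
  then have "q(t := q t - 1) \<in> PiE (insert t {..<nm}) (\<lambda>_. {..L})"
    using intr_bx[OF q] unfolding occ_box_def by (intro PiE_fun_upd) auto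
  moreover have "insert t {..<nm} = {..<nm}" using t by auto
  ultimately show ?thesis unfolding occ_dec_def occ_box_def by simp
qed

lemma upd_dn: "q \<in> occ_inner \<Longrightarrow> t < nm \<Longrightarrow> occ_inc (occ_dec q t) t = q"
proof -
  assume q: "q \<in> occ_inner" and t: "t < nm"
  have "q t \<ge> 1" using intr_ge1[OF q t] by simp
  then show ?thesis unfolding occ_inc_def occ_dec_def by auto
qed

lemma dn_upd: "occ_dec (occ_inc pt t) t = pt"
  unfolding occ_inc_def occ_dec_def by auto

lemma rho_dn: "q \<in> occ_inner \<Longrightarrow> t < nm \<Longrightarrow> occ_energy (occ_dec q t) = occ_energy q - pair_energy t"
  using rho_upd[of t "occ_dec q t"] upd_dn by simp

lemma mlt_eq: "pt \<in> occ_box \<Longrightarrow> card {r. r < NR \<and> lab r = pt} = degen pt"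
  using lab_count unfolding occ_box_def degen_def occ_energy_def pair_energy_def by blast

lemma mlt_lower: "real (degen pt) \<ge> real M * exp (\<beta> * occ_energy pt)"
proof -
  have "real M * exp (\<beta> * occ_energy pt) \<ge> 0" by simp
  then show ?thesis unfolding degen_def by linarith
qed

lemma mlt_upper: "real (degen pt) \<le> real M * exp (\<beta> * occ_energy pt) + 1"
proof -
  have "real M * exp (\<beta> * occ_energy pt) \<ge> 0" by simp
  then show ?thesis unfolding degen_def by linarith
qed

lemma mlt_pos: "degen pt \<ge> 1"
proof -
  have "real M * exp (\<beta> * occ_energy pt) > 0" using M1 by simp
  then have "\<lceil>real M * exp (\<beta> * occ_energy pt)\<rceil> \<ge> 1" by linarith
  then show ?thesis unfolding degen_def by linarith
qed

lemma bx_ne: "(\<lambda>s. if s < nm then 0 else undefined) \<in> occ_box"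
  unfolding occ_box_def by (auto simp: PiE_iff extensional_def)

lemma NR_pos: "NR > 0"
proof -
  let ?pt = "(\<lambda>s. if s < nm then 0 else undefined) :: nat \<Rightarrow> nat"
  have "card {r. r < NR \<and> lab r = ?pt} \<ge> 1" using mlt_eq[OF bx_ne] mlt_pos by simp
  then have "{r. r < NR \<and> lab r = ?pt} \<noteq> {}" by (metis card.empty not_one_le_zero)
  then show ?thesis by auto
qed

lemma lab_in: "r < NR \<Longrightarrow> lab r \<in> occ_box" using lab_range unfolding occ_box_def by blast

lemma class_eq: "card {p\<in>{..<N}. charge (split_in p) = q} = card {i\<in>{..<N}. charge (split_out i) = q}"
  using card_filter_bij_betw[OF decin_bij, of "\<lambda>z. charge z = q"] card_filter_bij_betw[OF decout_bij, of "\<lambda>z. charge z = q"] by simp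

lemma row_card:
  assumes q: "q \<in> occ_inner" and x: "x < n"
  shows "(\<Sum>y<m. degen (occ_dec q (x * m + y))) \<le> card {p\<in>{..<N}. charge (split_in p) = q \<and> p div lc = x}"
proof -
  have e1: "card {p\<in>{..<N}. charge (split_in p) = q \<and> p div lc = x} = card {z\<in>cells. charge z = q \<and> fst z = x}"
    using card_filter_bij_betw[OF decin_bij, of "\<lambda>z. charge z = q \<and> fst z = x"] by (simp add: split_in_def)
  let ?S = "Sigma {..<m} (\<lambda>y. {r. r < NR \<and> lab r = occ_dec q (x * m + y)})"
  have cS: "card ?S = (\<Sum>y<m. degen (occ_dec q (x * m + y)))"
  proof -
    have "card ?S = (\<Sum>y<m. card {r. r < NR \<and> lab r = occ_dec q (x * m + y)})" by (simp add: card_SigmaI)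
    also have "\<dots> = (\<Sum>y<m. degen (occ_dec q (x * m + y)))"
    proof (rule sum.cong[OF refl])
      fix y assume "y \<in> {..<m}"
      then have "x * m + y < nm" using mult_add_less_mult[OF x] by simp
      then show "card {r. r < NR \<and> lab r = occ_dec q (x * m + y)} = degen (occ_dec q (x * m + y))"
        using mlt_eq dn_bx q by blast
    qed
    finally show ?thesis .
  qed
  have "card ?S \<le> card {z\<in>cells. charge z = q \<and> fst z = x}"
  proof (rule card_inj_on_le[where f="\<lambda>(y,r). (x,y,r)"])
    show "inj_on (\<lambda>(y,r). (x,y,r)) ?S" by (auto simp: inj_on_def)
    show "(\<lambda>(y,r). (x,y,r)) ` ?S \<subseteq> {z\<in>cells. charge z = q \<and> fst z = x}"
    proof
      fix z assume "z \<in> (\<lambda>(y,r). (x,y,r)) ` ?S"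
      then obtain y r where yr: "z = (x,y,r)" "y < m" "r < NR" "lab r = occ_dec q (x * m + y)" by auto
      have t: "x * m + y < nm" using mult_add_less_mult[OF x yr(2)] .
      show "z \<in> {z\<in>cells. charge z = q \<and> fst z = x}"
        using yr x t upd_dn[OF q t] by (simp add: cells_def charge_def)
    qed
    show "finite {z\<in>cells. charge z = q \<and> fst z = x}" by (simp add: cells_def)
  qed
  then show ?thesis using e1 cS by simp
qed

lemma col_card:
  assumes q: "q \<in> occ_inner" and y: "y < m"
  shows "(\<Sum>x<n. degen (occ_dec q (x * m + y))) \<le> card {i\<in>{..<N}. charge (split_out i) = q \<and> i div ld = y}"
proof -
  have e1: "card {i\<in>{..<N}. charge (split_out i) = q \<and> i div ld = y} = card {z\<in>cells. charge z = q \<and> fst (snd z) = y}"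
    using card_filter_bij_betw[OF decout_bij, of "\<lambda>z. charge z = q \<and> fst (snd z) = y"] by (simp add: split_out_def)
  let ?S = "Sigma {..<n} (\<lambda>x. {r. r < NR \<and> lab r = occ_dec q (x * m + y)})"
  have cS: "card ?S = (\<Sum>x<n. degen (occ_dec q (x * m + y)))"
  proof -
    have "card ?S = (\<Sum>x<n. card {r. r < NR \<and> lab r = occ_dec q (x * m + y)})" by (simp add: card_SigmaI)
    also have "\<dots> = (\<Sum>x<n. degen (occ_dec q (x * m + y)))"
    proof (rule sum.cong[OF refl])
      fix x assume "x \<in> {..<n}"
      then have "x * m + y < nm" using mult_add_less_mult[OF _ y] by simp
      then show "card {r. r < NR \<and> lab r = occ_dec q (x * m + y)} = degen (occ_dec q (x * m + y))"
        using mlt_eq dn_bx q by blast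
    qed
    finally show ?thesis .
  qed
  have "card ?S \<le> card {z\<in>cells. charge z = q \<and> fst (snd z) = y}"
  proof (rule card_inj_on_le[where f="\<lambda>(x,r). (x,y,r)"])
    show "inj_on (\<lambda>(x,r). (x,y,r)) ?S" by (auto simp: inj_on_def)
    show "(\<lambda>(x,r). (x,y,r)) ` ?S \<subseteq> {z\<in>cells. charge z = q \<and> fst (snd z) = y}"
    proof
      fix z assume "z \<in> (\<lambda>(x,r). (x,y,r)) ` ?S"
      then obtain x r where xr: "z = (x,y,r)" "x < n" "r < NR" "lab r = occ_dec q (x * m + y)" by auto
      have t: "x * m + y < nm" using mult_add_less_mult[OF xr(2) y] .
      show "z \<in> {z\<in>cells. charge z = q \<and> fst (snd z) = y}"
        using xr y t upd_dn[OF q t] by (simp add: cells_def charge_def)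
    qed
    show "finite {z\<in>cells. charge z = q \<and> fst (snd z) = y}" by (simp add: cells_def)
  qed
  then show ?thesis using e1 cS by simp
qed

end


lemma real_nat_floor_le: "z \<ge> 0 \<Longrightarrow> real (nat \<lfloor>z\<rfloor>) \<le> z"
  by linarith

context bath_construction begin

definition "Za = partition_fn \<beta> a"
definition "Zb = partition_fn \<beta> b"
definition "demand_scale q x = real M * exp (\<beta> * (occ_energy q - a ! x)) * Zb"
definition "demand q y x = (if q \<in> occ_inner then nat \<lfloor>P y x * demand_scale q x\<rfloor> else 0)"

lemma Za_pos: "Za > 0" unfolding Za_def using partition_fn_pos[OF va] .
lemma Zb_pos: "Zb > 0" unfolding Zb_def using partition_fn_pos[OF vb] .

lemma Lam_nonneg: "demand_scale q x \<ge> 0" unfolding demand_scale_def using Zb_pos by simp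

lemma mlt_dn_lower:
  assumes q: "q \<in> occ_inner" and x: "x < n" and y: "y < m"
  shows "real (degen (occ_dec q (x * m + y))) \<ge> real M * exp (\<beta> * (occ_energy q - a ! x)) * exp (- \<beta> * b ! y)"
proof -
  have t: "x * m + y < nm" using mult_add_less_mult[OF x y] .
  have r: "occ_energy (occ_dec q (x * m + y)) = occ_energy q - a ! x - b ! y" using rho_dn[OF q t] pair_energy_slot[OF y] by simp
  have "exp (\<beta> * (occ_energy q - a ! x)) * exp (- \<beta> * b ! y) = exp (\<beta> * (occ_energy q - a ! x) + - \<beta> * b ! y)"
    by (rule exp_add[symmetric])
  also have "\<dots> = exp (\<beta> * occ_energy (occ_dec q (x * m + y)))" unfolding r by (simp add: algebra_simps)
  finally have e: "exp (\<beta> * (occ_energy q - a ! x)) * exp (- \<beta> * b ! y) = exp (\<beta> * occ_energy (occ_dec q (x * m + y)))" .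
  have "real M * exp (\<beta> * (occ_energy q - a ! x)) * exp (- \<beta> * b ! y) = real M * exp (\<beta> * occ_energy (occ_dec q (x * m + y)))"
    by (simp only: mult.assoc e)
  then show ?thesis using mlt_lower[of "occ_dec q (x * m + y)"] by linarith
qed

lemma sum_F_le:
  assumes "\<And>i. i \<in> I \<Longrightarrow> 0 \<le> w i" "finite I"
  shows "real (\<Sum>i\<in>I. nat \<lfloor>w i\<rfloor>) \<le> (\<Sum>i\<in>I. w i)"
proof -
  have "real (\<Sum>i\<in>I. nat \<lfloor>w i\<rfloor>) = (\<Sum>i\<in>I. real (nat \<lfloor>w i\<rfloor>))" by simp
  also have "\<dots> \<le> (\<Sum>i\<in>I. w i)" using assms by (intro sum_mono real_nat_floor_le) auto
  finally show ?thesis .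
qed

lemma rowF:
  assumes x: "x < n"
  shows "(\<Sum>y<m. demand q y x) \<le> card {p\<in>{..<N}. charge (split_in p) = q \<and> p div lc = x}"
proof (cases "q \<in> occ_inner")
  case False then show ?thesis by (simp add: demand_def)
next
  case q: True
  have "real (\<Sum>y<m. demand q y x) = real (\<Sum>y<m. nat \<lfloor>P y x * demand_scale q x\<rfloor>)" using q by (simp add: demand_def)
  also have "\<dots> \<le> (\<Sum>y<m. P y x * demand_scale q x)"
    using P0 x Lam_nonneg by (intro sum_F_le) auto
  also have "\<dots> = demand_scale q x" using P1 x by (simp add: sum_distrib_right[symmetric])
  also have "\<dots> = (\<Sum>y<m. real M * exp (\<beta> * (occ_energy q - a ! x)) * exp (- \<beta> * b ! y))"
    unfolding demand_scale_def Zb_def partition_fn_def by (simp add: sum_distrib_left)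
  also have "\<dots> \<le> (\<Sum>y<m. real (degen (occ_dec q (x * m + y))))"
    using mlt_dn_lower[OF q x] by (intro sum_mono) auto
  also have "\<dots> = real (\<Sum>y<m. degen (occ_dec q (x * m + y)))" by simp
  also have "\<dots> \<le> real (card {p\<in>{..<N}. charge (split_in p) = q \<and> p div lc = x})"
    using row_card[OF q x] by linarith
  finally show ?thesis by linarith
qed

lemma Pg': "y < m \<Longrightarrow> (\<Sum>x<n. P y x * exp (- \<beta> * a ! x)) = Za * exp (- \<beta> * b ! y) / Zb"
proof -
  assume y: "y < m"
  have "(\<Sum>x<n. P y x * (exp (- \<beta> * a ! x) / Za)) = exp (- \<beta> * b ! y) / Zb"
    using Pg y unfolding Za_def Zb_def by (simp add: diag_vec_gibbs)
  then have "(\<Sum>x<n. P y x * exp (- \<beta> * a ! x)) / Za = exp (- \<beta> * b ! y) / Zb"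
    by (simp add: sum_divide_distrib)
  then show ?thesis using Za_pos by (simp add: field_simps)
qed

lemma colF:
  assumes y: "y < m"
  shows "(\<Sum>x<n. demand q y x) \<le> card {i\<in>{..<N}. charge (split_out i) = q \<and> i div ld = y}"
proof (cases "q \<in> occ_inner")
  case False then show ?thesis by (simp add: demand_def)
next
  case q: True
  have "real (\<Sum>x<n. demand q y x) = real (\<Sum>x<n. nat \<lfloor>P y x * demand_scale q x\<rfloor>)" using q by (simp add: demand_def)
  also have "\<dots> \<le> (\<Sum>x<n. P y x * demand_scale q x)"
    using P0 y Lam_nonneg by (intro sum_F_le) auto
  also have "\<dots> = real M * exp (\<beta> * occ_energy q) * Zb * (\<Sum>x<n. P y x * exp (- \<beta> * a ! x))"
    unfolding demand_scale_def by (simp add: sum_distrib_left exp_diff field_simps exp_minus)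
  also have "\<dots> = real M * exp (\<beta> * occ_energy q) * Za * exp (- \<beta> * b ! y)"
    using Pg'[OF y] Zb_pos by simp
  also have "\<dots> = (\<Sum>x<n. real M * exp (\<beta> * (occ_energy q - a ! x)) * exp (- \<beta> * b ! y))"
    unfolding Za_def partition_fn_def by (simp add: sum_distrib_left sum_distrib_right exp_diff field_simps exp_minus)
  also have "\<dots> \<le> (\<Sum>x<n. real (degen (occ_dec q (x * m + y))))"
    using mlt_dn_lower[OF q _ y] by (intro sum_mono) auto
  also have "\<dots> = real (\<Sum>x<n. degen (occ_dec q (x * m + y)))" by simp
  also have "\<dots> \<le> real (card {i\<in>{..<N}. charge (split_out i) = q \<and> i div ld = y})"
    using col_card[OF q y] by linarith
  finally show ?thesis by linarith
qed

lemma sigma_exists: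
  "\<exists>\<sigma>. bij_betw \<sigma> {..<N} {..<N} \<and> (\<forall>p\<in>{..<N}. charge (split_out (\<sigma> p)) = charge (split_in p)) \<and>
     (\<forall>q. \<forall>x\<in>{..<n}. \<forall>y\<in>{..<m}. demand q y x \<le> card {p\<in>{..<N}. charge (split_in p) = q \<and> p div lc = x \<and> \<sigma> p div ld = y})"
proof (rule routing_bij)
  show "finite {..<N}" "finite {..<N}" "finite {..<n}" "finite {..<m}" by auto
  show "(\<lambda>p. p div lc) ` {..<N} \<subseteq> {..<n}" using less_mult_imp_div_less by auto
  show "(\<lambda>i. i div ld) ` {..<N} \<subseteq> {..<m}"
  proof
    fix z assume "z \<in> (\<lambda>i. i div ld) ` {..<N}"
    then obtain i where i: "i < N" "z = i div ld" by auto
    have "i < m * ld" using i(1) by (simp only: mult.left_commute[of n m NR])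
    then show "z \<in> {..<m}" using i(2) less_mult_imp_div_less by auto
  qed
  show "card {p\<in>{..<N}. charge (split_in p) = q} = card {i\<in>{..<N}. charge (split_out i) = q}" for q
    using class_eq by blast
  show "(\<Sum>y\<in>{..<m}. demand q y x) \<le> card {p\<in>{..<N}. charge (split_in p) = q \<and> p div lc = x}"
    if "x \<in> {..<n}" for q x
    using rowF that by blast
  show "(\<Sum>x\<in>{..<n}. demand q y x) \<le> card {i\<in>{..<N}. charge (split_out i) = q \<and> i div ld = y}"
    if "y \<in> {..<m}" for q y
    using colF that by blast
qed

end


context bath_construction begin

definition "ZR = (\<Sum>r<NR. exp (- \<beta> * occ_energy (lab r)))"
definition "Zc = partition_fn \<beta> bath_in"

lemma valid_c: "valid_ham bath_in"
proof -
  have "lc > 0" using m0 NR_pos by simp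
  moreover have "0 \<le> x" if "x \<in> set bath_in" for x
  proof -
    have "x \<in> (\<lambda>k. b ! (k div NR) + occ_energy (lab (k mod NR))) ` {0..<lc}" using that by (simp add: bath_in_def)
    then obtain k where k: "k < lc" "x = b ! (k div NR) + occ_energy (lab (k mod NR))" by auto
    have "k div NR < m" using k(1) less_mult_imp_div_less by blast
    then show ?thesis using k b_nonneg rho_nonneg by (simp add: add_nonneg_nonneg)
  qed
  ultimately show ?thesis unfolding valid_ham_def using c_len by (auto simp del: length_greater_0_conv)
qed

lemma valid_d: "valid_ham bath_out"
proof -
  have "ld > 0" using n0 NR_pos by simp
  moreover have "0 \<le> x" if "x \<in> set bath_out" for x
  proof -
    have "x \<in> (\<lambda>k. a ! (k div NR) + occ_energy (lab (k mod NR))) ` {0..<ld}" using that by (simp add: bath_out_def)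
    then obtain k where k: "k < ld" "x = a ! (k div NR) + occ_energy (lab (k mod NR))" by auto
    have "k div NR < n" using k(1) less_mult_imp_div_less by blast
    then show ?thesis using k a_nonneg rho_nonneg by (simp add: add_nonneg_nonneg)
  qed
  ultimately show ?thesis unfolding valid_ham_def using d_len by (auto simp del: length_greater_0_conv)
qed

lemma Zc_eq: "Zc = Zb * ZR"
proof -
  have "Zc = (\<Sum>k<m*NR. exp (- \<beta> * (b ! (k div NR) + occ_energy (lab (k mod NR)))))"
    unfolding Zc_def partition_fn_def c_len by (intro sum.cong refl) (simp add: c_nth)
  also have "\<dots> = (\<Sum>y<m. \<Sum>r<NR. exp (- \<beta> * (b ! y + occ_energy (lab r))))"
    by (rule sum_lessThan_mult_div_mod)
  also have "\<dots> = (\<Sum>y<m. exp (- \<beta> * b ! y) * ZR)"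
    unfolding ZR_def by (simp add: sum_distrib_left algebra_simps exp_add[symmetric])
  also have "\<dots> = Zb * ZR" unfolding Zb_def partition_fn_def by (simp add: sum_distrib_right)
  finally show ?thesis .
qed

lemma ZR_group: "ZR = (\<Sum>pt\<in>occ_box. real (degen pt) * exp (- \<beta> * occ_energy pt))"
proof -
  have fb: "finite occ_box" unfolding occ_box_def by (simp add: finite_PiE)
  have "ZR = (\<Sum>pt\<in>occ_box. \<Sum>r\<in>{r. r \<in> {..<NR} \<and> lab r = pt}. exp (- \<beta> * occ_energy (lab r)))"
    unfolding ZR_def by (rule sum.group[symmetric]) (use fb lab_in in auto)
  also have "\<dots> = (\<Sum>pt\<in>occ_box. real (degen pt) * exp (- \<beta> * occ_energy pt))"
  proof (rule sum.cong[OF refl])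
    fix pt assume pt: "pt \<in> occ_box"
    have "(\<Sum>r\<in>{r. r \<in> {..<NR} \<and> lab r = pt}. exp (- \<beta> * occ_energy (lab r))) = (\<Sum>r\<in>{r. r \<in> {..<NR} \<and> lab r = pt}. exp (- \<beta> * occ_energy pt))"
      by (rule sum.cong) auto
    also have "\<dots> = real (card {r. r < NR \<and> lab r = pt}) * exp (- \<beta> * occ_energy pt)" by simp
    also have "\<dots> = real (degen pt) * exp (- \<beta> * occ_energy pt)" using mlt_eq[OF pt] by simp
    finally show "(\<Sum>r\<in>{r. r \<in> {..<NR} \<and> lab r = pt}. exp (- \<beta> * occ_energy (lab r))) = real (degen pt) * exp (- \<beta> * occ_energy pt)" .
  qed
  finally show ?thesis .
qed

lemma mlt_exp_bounds: "real M \<le> real (degen pt) * exp (- \<beta> * occ_energy pt) \<and> real (degen pt) * exp (- \<beta> * occ_energy pt) \<le> real M + 1"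
proof
  have e: "exp (\<beta> * occ_energy pt) * exp (- \<beta> * occ_energy pt) = 1" by (simp add: exp_minus)
  have ep: "exp (- \<beta> * occ_energy pt) > 0" by simp
  have le1: "exp (- \<beta> * occ_energy pt) \<le> 1" using beta rho_nonneg[of pt] by simp
  have "real M = real M * exp (\<beta> * occ_energy pt) * exp (- \<beta> * occ_energy pt)" using e by (simp add: mult.assoc)
  also have "\<dots> \<le> real (degen pt) * exp (- \<beta> * occ_energy pt)" using mlt_lower[of pt] ep by (intro mult_right_mono) auto
  finally show "real M \<le> real (degen pt) * exp (- \<beta> * occ_energy pt)" .
  have "real (degen pt) * exp (- \<beta> * occ_energy pt) \<le> (real M * exp (\<beta> * occ_energy pt) + 1) * exp (- \<beta> * occ_energy pt)"
    using mlt_upper[of pt] ep by (intro mult_right_mono) auto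
  also have "\<dots> = real M + exp (- \<beta> * occ_energy pt)" using e by (simp add: algebra_simps)
  also have "\<dots> \<le> real M + 1" using le1 by simp
  finally show "real (degen pt) * exp (- \<beta> * occ_energy pt) \<le> real M + 1" .
qed

lemma card_bx: "card occ_box = (L+1) ^ nm"
  unfolding occ_box_def by (simp add: card_PiE)

lemma card_intr: "card occ_inner = L ^ nm"
  unfolding occ_inner_def by (simp add: card_PiE)

lemma ZR_bounds: "real (card occ_box) * real M \<le> ZR \<and> ZR \<le> real (card occ_box) * (real M + 1)"
proof -
  have fb: "finite occ_box" unfolding occ_box_def by (simp add: finite_PiE)
  have "(\<Sum>pt\<in>occ_box. real M) \<le> (\<Sum>pt\<in>occ_box. real (degen pt) * exp (- \<beta> * occ_energy pt))"
    using mlt_exp_bounds by (intro sum_mono) auto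
  moreover have "(\<Sum>pt\<in>occ_box. real (degen pt) * exp (- \<beta> * occ_energy pt)) \<le> (\<Sum>pt\<in>occ_box. real M + 1)"
    using mlt_exp_bounds by (intro sum_mono) auto
  ultimately show ?thesis unfolding ZR_group by simp
qed

lemma rho_ge_a:
  assumes q: "q \<in> occ_inner" and x: "x < n"
  shows "occ_energy q \<ge> a ! x"
proof -
  have t: "x * m + 0 < nm" using mult_add_less_mult[OF x m0] .
  have "real (q (x * m)) * pair_energy (x * m) \<le> occ_energy q"
    unfolding occ_energy_def using t pair_energy_nonneg by (intro member_le_sum) auto
  moreover have "q (x * m) \<ge> 1" using intr_ge1[OF q] t by simp
  moreover have "pair_energy (x * m) = a ! x + b ! 0" using pair_energy_slot[OF m0, of x] by simp
  moreover have "b ! 0 \<ge> 0" using b_nonneg m0 by simp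
  moreover have "pair_energy (x * m) \<ge> 0" using pair_energy_nonneg t by simp
  ultimately have "pair_energy (x * m) \<le> occ_energy q"
  proof -
    assume A: "real (q (x * m)) * pair_energy (x * m) \<le> occ_energy q" "q (x * m) \<ge> 1" "pair_energy (x * m) = a ! x + b ! 0" "b ! 0 \<ge> 0" "pair_energy (x * m) \<ge> 0"
    have "1 \<le> real (q (x * m))" using A(2) by simp
    then have "1 * pair_energy (x * m) \<le> real (q (x * m)) * pair_energy (x * m)" using A(5) by (rule mult_right_mono)
    then show ?thesis using A(1) by simp
  qed
  then show ?thesis using \<open>pair_energy (x * m) = a ! x + b ! 0\<close> \<open>b ! 0 \<ge> 0\<close> by linarith
qed

end


context bath_construction begin

definition "gibbs_in k = exp (- \<beta> * bath_in ! k) / Zc"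
definition "err = 1 / (real M + 1) + real nm / (real L + 1) + 1 / (Zb * real M)"

lemma Zc_pos: "Zc > 0" unfolding Zc_def using partition_fn_pos[OF valid_c] .
lemma ZR_pos: "ZR > 0" using Zc_eq Zc_pos Zb_pos by (metis zero_less_mult_pos)

lemma gam_nonneg: "gibbs_in k \<ge> 0" unfolding gibbs_in_def using Zc_pos by simp

definition "transition_of \<sigma> x y = (\<Sum>p<N. if p div lc = x \<and> \<sigma> p div ld = y then gibbs_in (p mod lc) else 0)"

lemma V_nonneg: "transition_of \<sigma> x y \<ge> 0"
  unfolding transition_of_def using gam_nonneg by (intro sum_nonneg) auto

lemma V_sum:
  assumes bij: "bij_betw \<sigma> {..<N} {..<N}" and x: "x < n"
  shows "(\<Sum>y<m. transition_of \<sigma> x y) = 1"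
proof -
  have "(\<Sum>y<m. transition_of \<sigma> x y) = (\<Sum>p<N. \<Sum>y<m. if p div lc = x \<and> \<sigma> p div ld = y then gibbs_in (p mod lc) else 0)"
    unfolding transition_of_def by (rule sum.swap)
  also have "\<dots> = (\<Sum>p<N. if p div lc = x then gibbs_in (p mod lc) else 0)"
  proof (rule sum.cong[OF refl])
    fix p assume p: "p \<in> {..<N}"
    have "\<sigma> p < N" using bij p by (auto simp: bij_betw_def)
    then have sp: "\<sigma> p < m * ld" by (simp only: mult.left_commute[of n m NR])
    have yl: "\<sigma> p div ld < m" using less_mult_imp_div_less[OF sp] .
    show "(\<Sum>y<m. if p div lc = x \<and> \<sigma> p div ld = y then gibbs_in (p mod lc) else 0) = (if p div lc = x then gibbs_in (p mod lc) else 0)"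
      using yl by (subst sum_eq_single[of _ "\<sigma> p div ld"]) auto
  qed
  also have "\<dots> = (\<Sum>x'<n. \<Sum>k<lc. if x' = x then gibbs_in k else 0)"
    by (rule sum_lessThan_mult_div_mod)
  also have "\<dots> = (\<Sum>k<lc. gibbs_in k)"
    using x by (subst sum_eq_single[of _ x]) auto
  also have "\<dots> = (\<Sum>k<lc. exp (- \<beta> * bath_in ! k)) / Zc" unfolding gibbs_in_def by (simp add: sum_divide_distrib)
  also have "\<dots> = 1" using Zc_pos unfolding Zc_def partition_fn_def c_len by simp
  finally show ?thesis .
qed

lemma V_lower:
  assumes bij: "bij_betw \<sigma> {..<N} {..<N}"
    and cnt: "\<forall>q. \<forall>x\<in>{..<n}. \<forall>y\<in>{..<m}. demand q y x \<le> card {p\<in>{..<N}. charge (split_in p) = q \<and> p div lc = x \<and> \<sigma> p div ld = y}"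
    and x: "x < n" and y: "y < m"
  shows "transition_of \<sigma> x y \<ge> P y x - err"
proof -
  define B where "B = {p\<in>{..<N}. p div lc = x \<and> \<sigma> p div ld = y}"
  define A where "A q = {p\<in>{..<N}. charge (split_in p) = q \<and> p div lc = x \<and> \<sigma> p div ld = y}" for q
  have fi: "finite occ_inner" unfolding occ_inner_def by (simp add: finite_PiE)
  have V1: "transition_of \<sigma> x y = (\<Sum>p\<in>B. gibbs_in (p mod lc))"
    unfolding transition_of_def B_def by (rule sum.inter_filter[symmetric]) simp
  have sub: "(\<Union>q\<in>occ_inner. A q) \<subseteq> B" unfolding A_def B_def by auto
  have step1: "(\<Sum>p\<in>(\<Union>q\<in>occ_inner. A q). gibbs_in (p mod lc)) \<le> (\<Sum>p\<in>B. gibbs_in (p mod lc))"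
    by (rule sum_mono2) (use sub gam_nonneg in \<open>auto simp: B_def\<close>)
  have U: "(\<Sum>p\<in>(\<Union>q\<in>occ_inner. A q). gibbs_in (p mod lc)) = (\<Sum>q\<in>occ_inner. \<Sum>p\<in>A q. gibbs_in (p mod lc))"
    by (rule sum.UNION_disjoint) (use fi in \<open>auto simp: A_def\<close>)
  define E where "E q = exp (- \<beta> * (occ_energy q - a ! x)) / Zc" for q
  have gA: "gibbs_in (p mod lc) = E q" if "q \<in> occ_inner" "p \<in> A q" for q p
  proof -
    have p: "p < N" "charge (split_in p) = q" "p div lc = x" using that(2) by (auto simp: A_def)
    have "a ! (p div length bath_in) + bath_in ! (p mod length bath_in) = occ_energy (charge (split_in p))" by (rule energy_in[OF p(1)])
    then have "bath_in ! (p mod lc) = occ_energy q - a ! x" using p c_len by simp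
    then show ?thesis unfolding gibbs_in_def E_def by simp
  qed
  have trm: "(\<Sum>p\<in>A q. gibbs_in (p mod lc)) \<ge> (P y x * real M * Zb - 1) / Zc" if q: "q \<in> occ_inner" for q
  proof -
    have "(\<Sum>p\<in>A q. gibbs_in (p mod lc)) = real (card (A q)) * E q"
      using gA[OF q] by simp
    moreover have "real (card (A q)) \<ge> P y x * demand_scale q x - 1"
    proof -
      have "demand q y x \<le> card (A q)" using cnt x y unfolding A_def by blast
      moreover have "real (demand q y x) \<ge> P y x * demand_scale q x - 1"
      proof -
        have "real (demand q y x) = real (nat \<lfloor>P y x * demand_scale q x\<rfloor>)" using q by (simp add: demand_def)
        then show ?thesis by linarith
      qed
      ultimately show ?thesis by linarith
    qed
    moreover have E0: "E q \<ge> 0" unfolding E_def using Zc_pos by simp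
    ultimately have "(\<Sum>p\<in>A q. gibbs_in (p mod lc)) \<ge> (P y x * demand_scale q x - 1) * E q"
      by (simp add: mult_right_mono)
    moreover have "(P y x * demand_scale q x - 1) * E q = (P y x * real M * Zb - exp (- \<beta> * (occ_energy q - a ! x))) / Zc"
    proof -
      have "exp (\<beta> * (occ_energy q - a ! x)) * exp (- \<beta> * (occ_energy q - a ! x)) = 1" by (simp add: exp_minus)
      then show ?thesis unfolding demand_scale_def E_def by (simp add: field_simps)
    qed
    moreover have "exp (- \<beta> * (occ_energy q - a ! x)) \<le> 1" using rho_ge_a[OF q x] beta by simp
    ultimately show ?thesis using Zc_pos by (smt (verit, ccfv_SIG) divide_right_mono)
  qed
  have step2: "(\<Sum>q\<in>occ_inner. \<Sum>p\<in>A q. gibbs_in (p mod lc)) \<ge> real (card occ_inner) * ((P y x * real M * Zb - 1) / Zc)"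
  proof -
    have "(\<Sum>q\<in>occ_inner. (P y x * real M * Zb - 1) / Zc) \<le> (\<Sum>q\<in>occ_inner. \<Sum>p\<in>A q. gibbs_in (p mod lc))"
      using trm by (intro sum_mono) auto
    then show ?thesis by simp
  qed
  define CI where "CI = real (card occ_inner)"
  define CB where "CB = real (card occ_box)"
  have CIpos: "CI > 0" unfolding CI_def card_intr using L1 by simp
  have CBpos: "CB > 0" unfolding CB_def card_bx by simp
  have CICB: "CI \<le> CB" unfolding CI_def CB_def card_intr card_bx by (simp add: power_mono)
  have ZRb: "CB * real M \<le> ZR" "ZR \<le> CB * (real M + 1)" using ZR_bounds unfolding CB_def by auto
  have P01: "0 \<le> P y x" "P y x \<le> 1"
  proof -
    show "0 \<le> P y x" using P0 x y by blast
    have "P y x \<le> (\<Sum>i<m. P i x)" using P0 x y by (intro member_le_sum) auto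
    then show "P y x \<le> 1" using P1 x by simp
  qed
  have Mpos: "real M > 0" using M1 by simp
  have step3: "CI * ((P y x * real M * Zb - 1) / Zc) = CI * P y x * real M / ZR - CI / (Zb * ZR)"
    using Zc_eq Zb_pos ZR_pos by (simp add: field_simps)
  have step4: "CI * P y x * real M / ZR \<ge> P y x * (real M / (real M + 1)) * (CI / CB)"
  proof -
    have "CI * P y x * real M / ZR \<ge> CI * P y x * real M / (CB * (real M + 1))"
      using ZRb ZR_pos CIpos P01 Mpos by (intro divide_left_mono) auto
    then show ?thesis by (simp add: field_simps)
  qed
  have step5: "CI / (Zb * ZR) \<le> 1 / (Zb * real M)"
  proof -
    have "CI / (Zb * ZR) \<le> CB / (Zb * (CB * real M))"
      using ZRb CICB Zb_pos CIpos Mpos ZR_pos by (intro frac_le) auto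
    also have "\<dots> = 1 / (Zb * real M)" using CBpos by simp
    finally show ?thesis .
  qed
  have step6: "CI / CB \<ge> 1 - real nm / (real L + 1)"
  proof -
    have "CI / CB = (real L / (real L + 1)) ^ nm" unfolding CI_def CB_def card_intr card_bx by (simp add: power_divide add.commute)
    also have "real L / (real L + 1) = 1 + (- 1 / (real L + 1))" by (simp add: field_simps)
    finally have e: "CI / CB = (1 + (- 1 / (real L + 1))) ^ nm" .
    have "1 + real nm * (- 1 / (real L + 1)) \<le> (1 + (- 1 / (real L + 1))) ^ nm"
      by (rule Bernoulli_inequality) (simp add: field_simps)
    then show ?thesis unfolding e by simp
  qed
  have r1: "0 \<le> real M / (real M + 1)" "real M / (real M + 1) \<le> 1" using Mpos by auto
  have r2: "0 \<le> CI / CB" "CI / CB \<le> 1" using CIpos CBpos CICB by auto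
  have "P y x * (real M / (real M + 1)) * (CI / CB) \<ge> P y x * (real M / (real M + 1)) * (1 - real nm / (real L + 1))"
    using step6 P01 r1 by (intro mult_left_mono) auto
  moreover have "P y x * (real M / (real M + 1)) * (1 - real nm / (real L + 1)) \<ge> P y x * (real M / (real M + 1)) - real nm / (real L + 1)"
  proof -
    have "P y x * (real M / (real M + 1)) \<le> 1" by (rule mult_le_one) (use P01 r1 in auto)
    moreover have "P y x * (real M / (real M + 1)) \<ge> 0" using P01 r1 by simp
    moreover have "real nm / (real L + 1) \<ge> 0" by simp
    ultimately have "P y x * (real M / (real M + 1)) * (real nm / (real L + 1)) \<le> real nm / (real L + 1)"
      by (intro mult_left_le_one_le) auto
    moreover have "P y x * (real M / (real M + 1)) * (1 - real nm / (real L + 1)) = P y x * (real M / (real M + 1)) - P y x * (real M / (real M + 1)) * (real nm / (real L + 1))"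
      by (simp add: right_diff_distrib)
    ultimately show ?thesis by linarith
  qed
  moreover have "P y x * (real M / (real M + 1)) \<ge> P y x - 1 / (real M + 1)"
  proof -
    have "real M / (real M + 1) = 1 - 1 / (real M + 1)" using Mpos by (simp add: field_simps)
    then have "P y x * (real M / (real M + 1)) = P y x - P y x / (real M + 1)" by (simp only: right_diff_distrib mult_1_right times_divide_eq_right)
    moreover have "P y x / (real M + 1) \<le> 1 / (real M + 1)" using P01 Mpos by (intro divide_right_mono) auto
    ultimately show ?thesis by simp
  qed
  ultimately have "P y x * (real M / (real M + 1)) * (CI / CB) \<ge> P y x - 1 / (real M + 1) - real nm / (real L + 1)"
    by linarith
  then have "CI * ((P y x * real M * Zb - 1) / Zc) \<ge> P y x - err"
    using step3 step4 step5 unfolding err_def by linarith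
  then show ?thesis using V1 step1 U step2 unfolding CI_def by linarith
qed

lemma locale_main:
  assumes nd: "rel_nondeg a b"
  shows "\<exists>T W. thermal_op \<beta> a b T \<and> (\<forall>x<n. \<forall>y<m. T (proj_mat n x) $$ (y,y) = complex_of_real (W x y)) \<and>
     (\<forall>x<n. \<forall>y<m. W x y \<ge> P y x - err \<and> W x y \<ge> 0) \<and> (\<forall>x<n. (\<Sum>y<m. W x y) = 1)"
proof -
  obtain \<sigma> where bij: "bij_betw \<sigma> {..<N} {..<N}" and key: "\<forall>p\<in>{..<N}. charge (split_out (\<sigma> p)) = charge (split_in p)"
    and cnt: "\<forall>q. \<forall>x\<in>{..<n}. \<forall>y\<in>{..<m}. demand q y x \<le> card {p\<in>{..<N}. charge (split_in p) = q \<and> p div lc = x \<and> \<sigma> p div ld = y}"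
    using sigma_exists by blast
  have N2: "length a * length bath_in = length b * length bath_out" using c_len d_len by simp
  have bij2: "bij_betw \<sigma> {..<length a * length bath_in} {..<length a * length bath_in}" using bij c_len by simp
  have en: "\<forall>p < length a * length bath_in. b ! (\<sigma> p div length bath_out) + bath_out ! (\<sigma> p mod length bath_out) = a ! (p div length bath_in) + bath_in ! (p mod length bath_in)"
  proof (intro allI impI)
    fix p assume "p < length a * length bath_in"
    then have p: "p < N" using c_len by simp
    have sp: "\<sigma> p < N" using bij p by (auto simp: bij_betw_def)
    show "b ! (\<sigma> p div length bath_out) + bath_out ! (\<sigma> p mod length bath_out) = a ! (p div length bath_in) + bath_in ! (p mod length bath_in)"
      using energy_out[OF sp] energy_in[OF p] key p by simp
  qed
  define T where "T = perm_op \<beta> (length b) bath_in bath_out \<sigma>"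
  have T: "thermal_op \<beta> a b T"
    unfolding T_def by (rule perm_op_thermal_op[OF valid_c valid_d N2 bij2 en])
  have Tf: "\<forall>x < length a. \<forall>y < length b.
     T (proj_mat (length a) x) $$ (y,y) = complex_of_real (\<Sum>p < length a * length bath_in.
        if p div length bath_in = x \<and> \<sigma> p div length bath_out = y then exp (- \<beta> * bath_in ! (p mod length bath_in)) / partition_fn \<beta> bath_in else 0)"
    unfolding T_def using index_perm_op_proj[OF nd N2 bij2 en] by blast
  have TV: "\<forall>x<n. \<forall>y<m. T (proj_mat n x) $$ (y,y) = complex_of_real (transition_of \<sigma> x y)"
    using Tf unfolding transition_of_def gibbs_in_def Zc_def c_len d_len by simp
  show ?thesis
    using T TV V_lower[OF bij cnt] V_nonneg V_sum[OF bij] by blast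
qed

end


context bath_construction begin
lemma del_eq: "err = 1 / (real M + 1) + real (length a * length b) / (real L + 1) + 1 / (partition_fn \<beta> b * real M)"
  unfolding err_def Zb_def by simp
end

lemma exists_lab:
  fixes B :: "(nat \<Rightarrow> nat) set" and f :: "(nat \<Rightarrow> nat) \<Rightarrow> nat"
  assumes "finite B"
  shows "\<exists>(NR::nat) (lab::nat \<Rightarrow> nat \<Rightarrow> nat). (\<forall>r<NR. lab r \<in> B) \<and> (\<forall>pt\<in>B. card {r. r < NR \<and> lab r = pt} = f pt)"
proof -
  define R where "R = Sigma B (\<lambda>pt. {..<f pt})"
  have fR: "finite R" unfolding R_def using assms by auto
  obtain e where e: "bij_betw e {0..<card R} R" using ex_bij_betw_nat_finite[OF fR] by blast
  have e2: "bij_betw e {..<card R} R" using e by (simp add: atLeast0LessThan)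
  define lab where "lab r = fst (e r)" for r
  have 1: "\<forall>r<card R. lab r \<in> B"
  proof (intro allI impI)
    fix r assume "r < card R"
    then have "e r \<in> R" using e2 by (auto simp: bij_betw_def)
    then show "lab r \<in> B" unfolding R_def lab_def by auto
  qed
  have 2: "\<forall>pt\<in>B. card {r. r < card R \<and> lab r = pt} = f pt"
  proof
    fix pt assume pt: "pt \<in> B"
    have "card {r\<in>{..<card R}. fst (e r) = pt} = card {z\<in>R. fst z = pt}"
      by (rule card_filter_bij_betw[OF e2])
    moreover have "{z\<in>R. fst z = pt} = {pt} \<times> {..<f pt}" unfolding R_def using pt by auto
    moreover have "{r\<in>{..<card R}. fst (e r) = pt} = {r. r < card R \<and> lab r = pt}" unfolding lab_def by auto
    ultimately show "card {r. r < card R \<and> lab r = pt} = f pt" by simp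
  qed
  show ?thesis using 1 2 by blast
qed

lemma approx_TO2:
  assumes beta: "\<beta> > 0" and va: "valid_ham a" and vb: "valid_ham b" and nd: "rel_nondeg a b"
    and P0: "\<forall>i<length b. \<forall>j<length a. 0 \<le> P i j" and P1: "\<forall>j<length a. (\<Sum>i<length b. P i j) = 1"
    and Pg: "\<forall>i<length b. (\<Sum>j<length a. P i j * diag_vec (gibbs \<beta> a) j) = diag_vec (gibbs \<beta> b) i"
  shows "\<exists>T. (\<forall>k. thermal_op \<beta> a b (T k)) \<and>
     (\<forall>x<length a. \<forall>y<length b. (\<lambda>k. T k (proj_mat (length a) x) $$ (y,y)) \<longlonglongrightarrow> complex_of_real (P y x))"
proof -
  let ?n = "length a" and ?m = "length b"
  let ?S = "?n * ?m"
  let ?Zb = "partition_fn \<beta> b"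
  have Zb: "?Zb > 0" using partition_fn_pos[OF vb] .
  define dK where "dK K = 1 / (real (Suc K) + 1) + real ?S / (real (Suc K) + 1) + 1 / (?Zb * real (Suc K))" for K
  have each: "\<exists>T W. thermal_op \<beta> a b T \<and> (\<forall>x<?n. \<forall>y<?m. T (proj_mat ?n x) $$ (y,y) = complex_of_real (W x y)) \<and>
     (\<forall>x<?n. \<forall>y<?m. W x y \<ge> P y x - dK K \<and> W x y \<ge> 0) \<and> (\<forall>x<?n. (\<Sum>y<?m. W x y) = 1)" for K
  proof -
    let ?M = "Suc K" and ?L = "Suc K"
    let ?B = "PiE {..<?S} (\<lambda>_. {..?L})"
    have fB: "finite ?B" by (simp add: finite_PiE)
    obtain NR :: nat and lab :: "nat \<Rightarrow> nat \<Rightarrow> nat" where lab1: "\<forall>r<NR. lab r \<in> ?B"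
      and lab2: "\<forall>pt\<in>?B. card {r. r < NR \<and> lab r = pt} = nat \<lceil>real ?M * exp (\<beta> * (\<Sum>s<?S. real (pt s) * (a ! (s div ?m) + b ! (s mod ?m))))\<rceil>"
      using exists_lab[OF fB, of "\<lambda>pt. nat \<lceil>real ?M * exp (\<beta> * (\<Sum>s<?S. real (pt s) * (a ! (s div ?m) + b ! (s mod ?m))))\<rceil>"]
      by blast
    have inst: "bath_construction a b \<beta> P ?M ?L NR lab"
      by (unfold_locales) (use va vb beta P0 P1 Pg lab1 lab2 in auto)
    show ?thesis using bath_construction.locale_main[OF inst nd] bath_construction.del_eq[OF inst] unfolding dK_def by simp
  qed
  then obtain T W where TW: "\<forall>K. thermal_op \<beta> a b (T K) \<and> (\<forall>x<?n. \<forall>y<?m. T K (proj_mat ?n x) $$ (y,y) = complex_of_real (W K x y)) \<and>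
     (\<forall>x<?n. \<forall>y<?m. W K x y \<ge> P y x - dK K \<and> W K x y \<ge> 0) \<and> (\<forall>x<?n. (\<Sum>y<?m. W K x y) = 1)"
    by metis
  have dK0: "dK K \<ge> 0" for K unfolding dK_def using Zb by simp
  have dKlim: "dK \<longlonglongrightarrow> 0"
  proof -
    have i1: "(\<lambda>K. inverse (real (Suc (Suc K)))) \<longlonglongrightarrow> 0"
      using LIMSEQ_Suc[OF LIMSEQ_inverse_real_of_nat] by simp
    have i2: "(\<lambda>K. inverse (real (Suc K))) \<longlonglongrightarrow> 0" by (rule LIMSEQ_inverse_real_of_nat)
    have "(\<lambda>K. inverse (real (Suc (Suc K))) + real ?S * inverse (real (Suc (Suc K))) + (1 / ?Zb) * inverse (real (Suc K))) \<longlonglongrightarrow> 0 + real ?S * 0 + (1 / ?Zb) * 0"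
      by (intro tendsto_intros i1 i2)
    moreover have "dK = (\<lambda>K. inverse (real (Suc (Suc K))) + real ?S * inverse (real (Suc (Suc K))) + (1 / ?Zb) * inverse (real (Suc K)))"
      unfolding dK_def by (rule ext) (simp add: field_simps)
    ultimately show ?thesis by simp
  qed
  have bound: "\<bar>W K x y - P y x\<bar> \<le> real ?m * dK K" if x: "x < ?n" and y: "y < ?m" for K x y
  proof -
    have lo: "W K x y' \<ge> P y' x - dK K" if "y' < ?m" for y' using TW x that by blast
    have s1: "(\<Sum>y'<?m. W K x y') = 1" using TW x by blast
    have s2: "(\<Sum>y'<?m. P y' x) = 1" using P1 x by blast
    have "W K x y - P y x = (\<Sum>y'\<in>{..<?m}-{y}. P y' x - W K x y')"
    proof -
      have "(\<Sum>y'<?m. W K x y') = W K x y + (\<Sum>y'\<in>{..<?m}-{y}. W K x y')" using y by (simp add: sum.remove)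
      moreover have "(\<Sum>y'<?m. P y' x) = P y x + (\<Sum>y'\<in>{..<?m}-{y}. P y' x)" using y by (simp add: sum.remove)
      ultimately show ?thesis using s1 s2 by (simp add: sum_subtractf)
    qed
    also have "\<dots> \<le> (\<Sum>y'\<in>{..<?m}-{y}. dK K)" proof (rule sum_mono)
      fix y' assume "y' \<in> {..<?m}-{y}"
      then have "y' < ?m" by simp
      then show "P y' x - W K x y' \<le> dK K" using lo[of y'] by linarith
    qed
    also have "\<dots> \<le> (\<Sum>y'<?m. dK K)" using dK0 by (intro sum_mono2) auto
    also have "\<dots> = real ?m * dK K" by simp
    finally have up: "W K x y - P y x \<le> real ?m * dK K" .
    have "real ?m \<ge> 1" using vb by (cases b) (auto simp: valid_ham_def)
    then have "1 * dK K \<le> real ?m * dK K" using dK0 by (intro mult_right_mono) auto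
    then have "dK K \<le> real ?m * dK K" by simp
    then show ?thesis using up lo[OF y] by linarith
  qed
  have conv: "(\<lambda>K. T K (proj_mat ?n x) $$ (y,y)) \<longlonglongrightarrow> complex_of_real (P y x)" if x: "x < ?n" and y: "y < ?m" for x y
  proof -
    have "(\<lambda>K. W K x y) \<longlonglongrightarrow> P y x"
    proof (rule tendsto_sandwich[where f="\<lambda>K. P y x - real ?m * dK K" and h="\<lambda>K. P y x + real ?m * dK K"])
      show "eventually (\<lambda>K. P y x - real ?m * dK K \<le> W K x y) sequentially"
      proof (intro always_eventually allI)
        fix K
        have "\<bar>W K x y - P y x\<bar> \<le> real ?m * dK K" by (rule bound[OF x y])
        then show "P y x - real ?m * dK K \<le> W K x y" by (simp add: abs_le_iff)
      qed
      show "eventually (\<lambda>K. W K x y \<le> P y x + real ?m * dK K) sequentially"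
      proof (intro always_eventually allI)
        fix K
        have "\<bar>W K x y - P y x\<bar> \<le> real ?m * dK K" by (rule bound[OF x y])
        then show "W K x y \<le> P y x + real ?m * dK K" by (simp add: abs_le_iff)
      qed
      show "(\<lambda>K. P y x - real ?m * dK K) \<longlonglongrightarrow> P y x"
        using tendsto_diff[OF tendsto_const tendsto_mult[OF tendsto_const dKlim], of "P y x" "real ?m"] by simp
      show "(\<lambda>K. P y x + real ?m * dK K) \<longlonglongrightarrow> P y x"
        using tendsto_add[OF tendsto_const tendsto_mult[OF tendsto_const dKlim], of "P y x" "real ?m"] by simp
    qed
    then have "(\<lambda>K. complex_of_real (W K x y)) \<longlonglongrightarrow> complex_of_real (P y x)" by (rule tendsto_of_real)
    moreover have "T K (proj_mat ?n x) $$ (y,y) = complex_of_real (W K x y)" for K using TW x y by blast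
    ultimately show ?thesis by simp
  qed
  show ?thesis using TW conv by blast
qed




lemma classical_channel_GPC:
  assumes "\<forall>i<length b. \<forall>j<length a. 0 \<le> P i j" "\<forall>j<length a. (\<Sum>i<length b. P i j) = 1"
    and "\<forall>i<length b. (\<Sum>j<length a. P i j * diag_vec (gibbs \<beta> a) j) = diag_vec (gibbs \<beta> b) i"
  shows "classical_channel (length a) (length b) P \<in> GPC \<beta> a b"
  using assms classical_channel_channel classical_channel_time_cov
    classical_channel_eq[OF adj_gibbs gibbs_carrier adj_gibbs gibbs_carrier gibbs_diagonal]
  unfolding GPC_def by blast

lemma classical_channel_CTO:
  assumes beta: "\<beta> > 0" and va: "valid_ham a" and vb: "valid_ham b" and nd: "rel_nondeg a b"
    and P0: "\<forall>i<length b. \<forall>j<length a. 0 \<le> P i j" and P1: "\<forall>j<length a. (\<Sum>i<length b. P i j) = 1"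
    and Pg: "\<forall>i<length b. (\<Sum>j<length a. P i j * diag_vec (gibbs \<beta> a) j) = diag_vec (gibbs \<beta> b) i"
  shows "classical_channel (length a) (length b) P \<in> CTO \<beta> a b"
proof -
  let ?n = "length a" and ?m = "length b" and ?E = "classical_channel (length a) (length b) P"
  obtain T where T: "\<forall>k. thermal_op \<beta> a b (T k)"
    and conv: "\<forall>x<?n. \<forall>y<?m. (\<lambda>k. T k (proj_mat ?n x) $$ (y,y)) \<longlonglongrightarrow> complex_of_real (P y x)"
    using approx_TO2[OF assms] by blast
  have "(\<lambda>k. T k X $$ (i,j)) \<longlonglongrightarrow> ?E X $$ (i,j)"
    if X: "X \<in> carrier_mat ?n ?n" and i: "i < ?m" and j: "j < ?m" for X i j
  proof -
    have T_entry: "T k X $$ (i,j) = (if i = j then (\<Sum>x<?n. X $$ (x,x) * T k (proj_mat ?n x) $$ (i,i)) else 0)" for k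
      using thermal_op_diag_action[OF nd T[rule_format, of k] X] i j unfolding diag_action_def by blast
    have "(\<lambda>k. \<Sum>x<?n. X $$ (x,x) * T k (proj_mat ?n x) $$ (i,i)) \<longlonglongrightarrow> (\<Sum>x<?n. X $$ (x,x) * complex_of_real (P i x))"
      using conv i by (intro tendsto_sum tendsto_mult tendsto_const) auto
    then show ?thesis unfolding T_entry using i j by (cases "i = j") (auto simp: classical_channel_def mult.commute)
  qed
  then show ?thesis unfolding CTO_def using classical_channel_channel[OF P0 P1] T by blast
qed

theorem corollary2:
  fixes \<beta> :: real and a b :: "real list" and \<rho> \<sigma> :: "complex mat"
  assumes "\<beta> > 0" and "valid_ham a" and "valid_ham b"
    and "rel_nondeg a b"
    and "is_state (length a) \<rho>" and "is_state (length b) \<sigma>"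
    and "\<FF> \<in> {CTO \<beta> a b, GPC \<beta> a b}"
  shows "(\<exists>E \<in> \<FF>. E \<rho> = \<sigma> \<and> E (gibbs \<beta> a) = gibbs \<beta> b) \<longleftrightarrow>
         (diagonal_mat \<sigma> \<and>
          rel_maj (length a) (diag_vec \<rho>) (diag_vec (gibbs \<beta> a))
                  (length b) (diag_vec \<sigma>) (diag_vec (gibbs \<beta> b)))"
proof
  have \<rho>: "adj \<rho> = \<rho>" "\<rho> \<in> carrier_mat (length a) (length a)" and \<sigma>: "adj \<sigma> = \<sigma>" "\<sigma> \<in> carrier_mat (length b) (length b)"
    using assms(5,6) unfolding is_state_def psd_def by auto
  {
    assume "\<exists>E \<in> \<FF>. E \<rho> = \<sigma> \<and> E (gibbs \<beta> a) = gibbs \<beta> b"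
    then obtain E where E: "E \<in> \<FF>" "E \<rho> = \<sigma>" "E (gibbs \<beta> a) = gibbs \<beta> b" by blast
    show "diagonal_mat \<sigma> \<and> rel_maj (length a) (diag_vec \<rho>) (diag_vec (gibbs \<beta> a))
                                  (length b) (diag_vec \<sigma>) (diag_vec (gibbs \<beta> b))"
      using rel_maj_if_diag_action[OF free_op_channel[OF assms(7) E(1)] \<rho>
          free_op_diag_action[OF assms(4,7) E(1) assms(5)] adj_gibbs[of \<beta> a] gibbs_carrier[of \<beta> a]
          free_op_diag_action[OF assms(4,7) E(1) gibbs_is_state[OF assms(2)]]] E(2,3) \<sigma>
      by simp
  }
  assume "diagonal_mat \<sigma> \<and> rel_maj (length a) (diag_vec \<rho>) (diag_vec (gibbs \<beta> a))
                                   (length b) (diag_vec \<sigma>) (diag_vec (gibbs \<beta> b))"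
  then obtain P where P0: "\<forall>i<length b. \<forall>j<length a. 0 \<le> P i j" and P1: "\<forall>j<length a. (\<Sum>i<length b. P i j) = 1"
    and P\<rho>: "\<forall>i<length b. (\<Sum>j<length a. P i j * diag_vec \<rho> j) = diag_vec \<sigma> i"
    and Pg: "\<forall>i<length b. (\<Sum>j<length a. P i j * diag_vec (gibbs \<beta> a) j) = diag_vec (gibbs \<beta> b) i"
    and "diagonal_mat \<sigma>"
    unfolding rel_maj_def by blast
  then have "classical_channel (length a) (length b) P \<rho> = \<sigma>"
    using classical_channel_eq[OF \<rho> \<sigma>] by blast
  moreover have "classical_channel (length a) (length b) P (gibbs \<beta> a) = gibbs \<beta> b"
    using classical_channel_eq[OF adj_gibbs gibbs_carrier adj_gibbs gibbs_carrier gibbs_diagonal Pg] .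
  moreover have "classical_channel (length a) (length b) P \<in> \<FF>"
    using assms(7) classical_channel_GPC[OF P0 P1 Pg] classical_channel_CTO[OF assms(1-4) P0 P1 Pg] by blast
  ultimately show "\<exists>E \<in> \<FF>. E \<rho> = \<sigma> \<and> E (gibbs \<beta> a) = gibbs \<beta> b" by blast
qed

end
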